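(* Every reduced triangle in the hyperbolic plane $\mathbb{H}^2$ is a regular triangle (i.e., the only reduced hyperbolic triangles are the regular ones).
   Context: A convex body in $\mathbb{H}^2$ is a compact convex set with nonempty interior. For a line $H$ supporting a convex body $C$, $\mathrm{width}_H(C)$ is the distance between $H$ and a farthest line ultraparallel to $H$ supporting $C$; the thickness $\Delta(C)$ is the minimum of $\mathrm{width}_H(C)$ over supporting lines $H$. A convex body $R$ is reduced if $\Delta(Z)<\Delta(R)$ for every convex body $Z$ properly contained in $R$. A regular triangle is one with all three sides of equal length. *)

theory Defs
  imports "HOL-Analysis.Analysis"
begin

text \<open>The hyperbolic plane in the Beltrami--Klein model: the open unit disk of
the complex plane (viewed as the Euclidean plane). In this model hyperbolic
lines are the nonempty intersections of Euclidean lines with the disk, hyperbolic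
geodesic segments are Euclidean segments, hence hyperbolic convexity is Euclidean
convexity, and the hyperbolic topology is the Euclidean one.\<close>

definition H2 :: "complex set" where
  "H2 = ball 0 1"

definition hdist :: "complex \<Rightarrow> complex \<Rightarrow> real" where
  "hdist p q = arcosh ((1 - inner p q) / sqrt ((1 - (norm p)\<^sup>2) * (1 - (norm q)\<^sup>2)))"

definition hsetdist :: "complex set \<Rightarrow> complex set \<Rightarrow> real" where
  "hsetdist A B = (INF p\<in>A. INF q\<in>B. hdist p q)"

definition hline :: "complex set \<Rightarrow> bool" where
  "hline L \<longleftrightarrow> (\<exists>a b. a \<in> H2 \<and> b \<in> H2 \<and> a \<noteq> b \<and> L = affine hull {a, b} \<inter> H2)"

text \<open>Two hyperbolic lines are ultraparallel iff they neither meet in the plane nor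
at an ideal point, i.e. their chords have disjoint Euclidean closures.\<close>
definition ultraparallel :: "complex set \<Rightarrow> complex set \<Rightarrow> bool" where
  "ultraparallel L M \<longleftrightarrow> hline L \<and> hline M \<and> closure L \<inter> closure M = {}"

definition convex_body :: "complex set \<Rightarrow> bool" where
  "convex_body C \<longleftrightarrow> C \<subseteq> H2 \<and> compact C \<and> convex C \<and> interior C \<noteq> {}"

definition supporting :: "complex set \<Rightarrow> complex set \<Rightarrow> bool" where
  "supporting H C \<longleftrightarrow> hline H \<and> H \<inter> C \<noteq> {} \<and>
     (\<exists>u c. u \<noteq> 0 \<and> H = {x \<in> H2. inner u x = c} \<and> (\<forall>x\<in>C. inner u x \<le> c))"

definition hwidth :: "complex set \<Rightarrow> complex set \<Rightarrow> real" where
  "hwidth H C = (SUP H'\<in>{H'. supporting H' C \<and> ultraparallel H H'}. hsetdist H H')"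

definition thickness :: "complex set \<Rightarrow> real" where
  "thickness C = (INF H\<in>{H. supporting H C}. hwidth H C)"

definition reduced :: "complex set \<Rightarrow> bool" where
  "reduced R \<longleftrightarrow> convex_body R \<and>
     (\<forall>Z. convex_body Z \<and> Z \<subset> R \<longrightarrow> thickness Z < thickness R)"

text \<open>Hyperbolic triangle with vertices a b c (geodesic convex hull = Euclidean
convex hull in the Klein model).\<close>
definition htriangle :: "complex \<Rightarrow> complex \<Rightarrow> complex \<Rightarrow> bool" where
  "htriangle a b c \<longleftrightarrow> a \<in> H2 \<and> b \<in> H2 \<and> c \<in> H2 \<and> \<not> collinear {a, b, c}"

definition regular_triangle :: "complex \<Rightarrow> complex \<Rightarrow> complex \<Rightarrow> bool" where
  "regular_triangle a b c \<longleftrightarrow> hdist a b = hdist b c \<and> hdist b c = hdist c a"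

end

(*
  Lift the Klein disk to the hyperboloid of unit timelike vectors in Minkowski space.  Then
  cosh (hdist p q) = - <P, Q>, and a point X is at distance d from the line with spacelike
  normal n, where sinh^2 d = <X, n>^2 / <n, n>.

  The width of a triangle abc with respect to the line ab is at most the height from c, so its
  thickness is at most the height onto a longest side; sinh^2 of that height is
  det (A, B, C)^2 / (M^2 - 1), where M is the largest cosh of a side.  If the triangle is not
  regular, some side bc is shorter than a longest side.  Cut off the vertex a along the segment
  from A + eps B to A + eps C.  Every supporting line of the cut triangle passes through a
  vertex, and the normals of the supporting lines at a vertex form the cone spanned by the
  normals of the two edges there.  Hence finitely many inequalities between edge lines and
  vertices guarantee that some vertex is at least that height away from each supporting line.
  At eps = 0 these inequalities are strict (this is where bc being shorter is used), so they
  persist for small eps.  Then the thickness of the cut triangle is at least that of the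
  triangle, which therefore is not reduced.
*)

theory Submission
  imports Defs
begin

section \<open>Minkowski space\<close>

lemma sum_products_sq_le:
  fixes a b c d :: real
  shows "(a * c + b * d)\<^sup>2 \<le> (a\<^sup>2 + b\<^sup>2) * (c\<^sup>2 + d\<^sup>2)"
  using Cauchy_Schwarz_ineq[of "Complex a b" "Complex c d"]
  by (simp add: inner_complex_def power2_eq_square)

datatype mvec = MVec (mv0: real) (mv1: real) (mv2: real)

instantiation mvec :: real_vector
begin

definition "0 = MVec 0 0 0"
definition "X + Y = MVec (mv0 X + mv0 Y) (mv1 X + mv1 Y) (mv2 X + mv2 Y)"
definition "- X = MVec (- mv0 X) (- mv1 X) (- mv2 X)"
definition "X - Y = MVec (mv0 X - mv0 Y) (mv1 X - mv1 Y) (mv2 X - mv2 Y)"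
definition "r *\<^sub>R X = MVec (r * mv0 X) (r * mv1 X) (r * mv2 X)"

instance
  by standard
    (simp_all add: zero_mvec_def plus_mvec_def uminus_mvec_def minus_mvec_def
      scaleR_mvec_def mvec.expand algebra_simps)

end

lemma mvec_components [simp]:
  "mv0 0 = 0" "mv1 0 = 0" "mv2 0 = 0"
  "mv0 (X + Y) = mv0 X + mv0 Y" "mv1 (X + Y) = mv1 X + mv1 Y" "mv2 (X + Y) = mv2 X + mv2 Y"
  "mv0 (X - Y) = mv0 X - mv0 Y" "mv1 (X - Y) = mv1 X - mv1 Y" "mv2 (X - Y) = mv2 X - mv2 Y"
  "mv0 (- X) = - mv0 X" "mv1 (- X) = - mv1 X" "mv2 (- X) = - mv2 X"
  "mv0 (r *\<^sub>R X) = r * mv0 X" "mv1 (r *\<^sub>R X) = r * mv1 X" "mv2 (r *\<^sub>R X) = r * mv2 X"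
  by (simp_all add: zero_mvec_def plus_mvec_def minus_mvec_def uminus_mvec_def scaleR_mvec_def)

definition mink :: "mvec \<Rightarrow> mvec \<Rightarrow> real" where
  "mink X Y = - mv0 X * mv0 Y + mv1 X * mv1 Y + mv2 X * mv2 Y"

definition mdet :: "mvec \<Rightarrow> mvec \<Rightarrow> mvec \<Rightarrow> real" where
  "mdet X Y Z = mv0 X * (mv1 Y * mv2 Z - mv2 Y * mv1 Z) - mv1 X * (mv0 Y * mv2 Z - mv2 Y * mv0 Z)
     + mv2 X * (mv0 Y * mv1 Z - mv1 Y * mv0 Z)"

definition mcross :: "mvec \<Rightarrow> mvec \<Rightarrow> mvec" where
  "mcross Y Z = MVec (mv2 Y * mv1 Z - mv1 Y * mv2 Z) (mv2 Y * mv0 Z - mv0 Y * mv2 Z)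
     (mv0 Y * mv1 Z - mv1 Y * mv0 Z)"

lemma mink_commute: "mink X Y = mink Y X"
  by (simp add: mink_def algebra_simps)

lemma mink_linear [simp]:
  "mink (X + Y) Z = mink X Z + mink Y Z" "mink Z (X + Y) = mink Z X + mink Z Y"
  "mink (X - Y) Z = mink X Z - mink Y Z" "mink Z (X - Y) = mink Z X - mink Z Y"
  "mink (- X) Z = - mink X Z" "mink Z (- X) = - mink Z X"
  "mink (r *\<^sub>R X) Z = r * mink X Z" "mink Z (r *\<^sub>R X) = r * mink Z X"
  by (simp_all add: mink_def algebra_simps)

lemma mdet_perm:
  "mdet Y X Z = - mdet X Y Z" "mdet X Z Y = - mdet X Y Z" "mdet Z Y X = - mdet X Y Z"
  "mdet Y Z X = mdet X Y Z" "mdet Z X Y = mdet X Y Z"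
  by (simp_all add: mdet_def algebra_simps)

lemma mink_mcross [simp]: "mink X (mcross Y Z) = mdet X Y Z"
  by (simp add: mink_def mcross_def mdet_def algebra_simps)

lemma mink_mcross_mcross:
  "mink (mcross X Y) (mcross Z W) = mink X W * mink Y Z - mink X Z * mink Y W"
  by (simp add: mink_def mcross_def algebra_simps)

lemma mink_gram_det:
  "mink X X * (mink Y Y * mink Z Z - (mink Y Z)\<^sup>2) - mink X Y * (mink X Y * mink Z Z - mink Y Z * mink X Z)
     + mink X Z * (mink X Y * mink Y Z - mink Y Y * mink X Z) = - (mdet X Y Z)\<^sup>2"
  unfolding mink_def mdet_def power2_eq_square by algebra

lemma mcross_expansion:
  "mink E X *\<^sub>R mcross Y Z + mink E Y *\<^sub>R mcross Z X + mink E Z *\<^sub>R mcross X Y = mdet X Y Z *\<^sub>R E"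
  by (simp add: mink_def mcross_def mdet_def mvec.expand algebra_simps)

lemma mink_orthogonal_timelike_nonneg:
  assumes "mink T T < 0" "mink T N = 0"
  shows "mink N N \<ge> 0"
proof -
  obtain t0 t1 t2 where T: "T = MVec t0 t1 t2" by (cases T)
  obtain n0 n1 n2 where N: "N = MVec n0 n1 n2" by (cases N)
  have timelike: "t1\<^sup>2 + t2\<^sup>2 < t0\<^sup>2" using assms(1) by (simp add: T mink_def power2_eq_square)
  have orth: "t0 * n0 = t1 * n1 + t2 * n2" using assms(2) by (simp add: T N mink_def)
  have "(t1 * n1 + t2 * n2)\<^sup>2 \<le> (t1\<^sup>2 + t2\<^sup>2) * (n1\<^sup>2 + n2\<^sup>2)"
    by (rule sum_products_sq_le)
  also have "\<dots> \<le> t0\<^sup>2 * (n1\<^sup>2 + n2\<^sup>2)" using timelike by (intro mult_right_mono) auto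
  finally have "t0\<^sup>2 * n0\<^sup>2 \<le> t0\<^sup>2 * (n1\<^sup>2 + n2\<^sup>2)" using orth by (metis power_mult_distrib)
  moreover have "t0\<^sup>2 > 0" using timelike by (smt (verit) zero_le_power2)
  ultimately have "n0\<^sup>2 \<le> n1\<^sup>2 + n2\<^sup>2" by simp
  then show ?thesis by (simp add: N mink_def power2_eq_square)
qed

lemma mink_orthogonal_timelike_cauchy_schwarz:
  assumes "mink T T < 0" "mink T N1 = 0" "mink T N2 = 0"
  shows "(mink N1 N2)\<^sup>2 \<le> mink N1 N1 * mink N2 N2"
proof -
  have "mink T T * (mink N1 N1 * mink N2 N2 - (mink N1 N2)\<^sup>2) \<le> 0"
    using mink_gram_det[of T N1 N2] assms(2,3) by simp
  then show ?thesis using assms(1) by (simp add: mult_le_0_iff)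
qed

lemma mink_timelike_same_cone:
  assumes "mink Q Q < 0" "mv0 Q > 0" "mink P P < 0" "mink P Q < 0"
  shows "mv0 P > 0"
proof (rule ccontr)
  assume "\<not> mv0 P > 0"
  obtain q0 q1 q2 where Q: "Q = MVec q0 q1 q2" by (cases Q)
  obtain p0 p1 p2 where P: "P = MVec p0 p1 p2" by (cases P)
  have hq: "q1\<^sup>2 + q2\<^sup>2 < q0\<^sup>2" using assms(1) by (simp add: Q mink_def power2_eq_square)
  have hp: "p1\<^sup>2 + p2\<^sup>2 < p0\<^sup>2" using assms(3) by (simp add: P mink_def power2_eq_square)
  have pq: "p1 * q1 + p2 * q2 < p0 * q0" using assms(4) by (simp add: P Q mink_def)
  have "p0 * q0 \<le> 0" using \<open>\<not> mv0 P > 0\<close> assms(2) by (simp add: P Q mult_nonpos_nonneg)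
  have "(p1 * q1 + p2 * q2)\<^sup>2 \<le> (p1\<^sup>2 + p2\<^sup>2) * (q1\<^sup>2 + q2\<^sup>2)"
    by (rule sum_products_sq_le)
  also have "\<dots> \<le> p0\<^sup>2 * q0\<^sup>2" using hp hq by (intro mult_mono) auto
  also have "\<dots> = (p0 * q0)\<^sup>2" by (simp add: power_mult_distrib)
  finally show False using pq \<open>p0 * q0 \<le> 0\<close>
    by (smt (verit) abs_le_square_iff abs_of_nonpos)
qed

text \<open>For a unit timelike \<open>V\<close>, \<open>far_side \<sigma> N V\<close> says that the point \<open>V\<close> lies in the closed
  half-plane \<open>mink _ N \<le> 0\<close> at a distance \<open>d\<close> from the line \<open>N\<^sup>\<bottom>\<close> with \<open>sinh\<^sup>2 d \<ge> \<sigma>\<close>.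
  Both arguments are homogeneous, so timelike vectors need not be normalised.\<close>
definition far_side :: "real \<Rightarrow> mvec \<Rightarrow> mvec \<Rightarrow> bool" where
  "far_side \<sigma> N V \<longleftrightarrow> mink V N \<le> 0 \<and> \<sigma> * (- mink V V) * mink N N \<le> (mink V N)\<^sup>2"

lemma far_side_scaleR:
  assumes "k > 0"
  shows "far_side \<sigma> (k *\<^sub>R N) V \<longleftrightarrow> far_side \<sigma> N V"
    and "far_side \<sigma> N (k *\<^sub>R V) \<longleftrightarrow> far_side \<sigma> N V"
proof -
  have k2: "k\<^sup>2 > 0" using assms by simp
  have "\<sigma> * (- mink V V) * mink (k *\<^sub>R N) (k *\<^sub>R N) = k\<^sup>2 * (\<sigma> * (- mink V V) * mink N N)"
    "\<sigma> * (- mink (k *\<^sub>R V) (k *\<^sub>R V)) * mink N N = k\<^sup>2 * (\<sigma> * (- mink V V) * mink N N)"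
    "(mink V (k *\<^sub>R N))\<^sup>2 = k\<^sup>2 * (mink V N)\<^sup>2" "(mink (k *\<^sub>R V) N)\<^sup>2 = k\<^sup>2 * (mink V N)\<^sup>2"
    by (simp_all add: power2_eq_square)
  moreover have "mink V (k *\<^sub>R N) \<le> 0 \<longleftrightarrow> mink V N \<le> 0" "mink (k *\<^sub>R V) N \<le> 0 \<longleftrightarrow> mink V N \<le> 0"
    using assms by (simp_all add: mult_le_0_iff)
  ultimately show "far_side \<sigma> (k *\<^sub>R N) V \<longleftrightarrow> far_side \<sigma> N V"
    and "far_side \<sigma> N (k *\<^sub>R V) \<longleftrightarrow> far_side \<sigma> N V"
    unfolding far_side_def using k2 by (simp_all only: mult_le_cancel_left_pos)
qed

text \<open>The normal of the plane spanned by \<open>X\<close> and \<open>Y\<close>, oriented so that \<open>Z\<close> is on its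
  nonpositive side.\<close>
definition side_normal :: "mvec \<Rightarrow> mvec \<Rightarrow> mvec \<Rightarrow> mvec" where
  "side_normal X Y Z = mdet X Y Z *\<^sub>R mcross Y X"

lemma mink_side_normal [simp]:
  "mink X (side_normal X Y Z) = 0" "mink Y (side_normal X Y Z) = 0"
  "mink Z (side_normal X Y Z) = - (mdet X Y Z)\<^sup>2"
  by (simp_all add: side_normal_def mdet_def power2_eq_square algebra_simps)

lemma mink_side_normal_self:
  "mink (side_normal X Y Z) (side_normal X Y Z)
     = (mdet X Y Z)\<^sup>2 * ((mink X Y)\<^sup>2 - mink X X * mink Y Y)"
  unfolding side_normal_def mink_linear mink_mcross_mcross
  by (simp add: mink_commute[of Y X] power2_eq_square)

text \<open>For timelike \<open>X\<close>, \<open>Y\<close>, \<open>Z\<close> this says \<open>sinh\<^sup>2 d \<ge> \<sigma>\<close>, where \<open>d\<close> is the distance of the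
  point \<open>Z\<close> from the line through the points \<open>X\<close> and \<open>Y\<close>.\<close>
definition far_from_line :: "real \<Rightarrow> mvec \<Rightarrow> mvec \<Rightarrow> mvec \<Rightarrow> bool" where
  "far_from_line \<sigma> X Y Z \<longleftrightarrow>
     \<sigma> * (- mink Z Z) * ((mink X Y)\<^sup>2 - mink X X * mink Y Y) \<le> (mdet X Y Z)\<^sup>2"

lemma far_side_side_normal_iff:
  assumes "mdet X Y Z \<noteq> 0"
  shows "far_side \<sigma> (side_normal X Y Z) Z \<longleftrightarrow> far_from_line \<sigma> X Y Z"
proof -
  define G where "G = (mink X Y)\<^sup>2 - mink X X * mink Y Y"
  have d2: "(mdet X Y Z)\<^sup>2 > 0" using assms by simp
  have "\<sigma> * (- mink Z Z) * mink (side_normal X Y Z) (side_normal X Y Z)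
      = (mdet X Y Z)\<^sup>2 * (\<sigma> * (- mink Z Z) * G)"
    by (simp add: mink_side_normal_self G_def)
  moreover have "(mink Z (side_normal X Y Z))\<^sup>2 = (mdet X Y Z)\<^sup>2 * (mdet X Y Z)\<^sup>2"
    by (simp add: power2_eq_square)
  ultimately show ?thesis
    unfolding far_side_def far_from_line_def G_def[symmetric] using d2
    by (simp only: mink_side_normal mult_le_cancel_left_pos) simp
qed

lemma side_normal_cone:
  assumes "mdet T P Q \<noteq> 0" "mink T N = 0" "mink P N \<le> 0" "mink Q N \<le> 0"
  obtains \<alpha> \<beta> where "\<alpha> \<ge> 0" "\<beta> \<ge> 0" "N = \<alpha> *\<^sub>R side_normal T P Q + \<beta> *\<^sub>R side_normal T Q P"
proof -
  define d2 where "d2 = (mdet T P Q)\<^sup>2"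
  have d2: "d2 > 0" using assms(1) by (simp add: d2_def)
  define \<alpha> \<beta> where "\<alpha> = - mink Q N / d2" and "\<beta> = - mink P N / d2"
  define E where "E = N - \<alpha> *\<^sub>R side_normal T P Q - \<beta> *\<^sub>R side_normal T Q P"
  have "mink T E = 0" "mink P E = 0" "mink Q E = 0"
    using assms d2 by (simp_all add: E_def \<alpha>_def \<beta>_def d2_def mdet_perm(2)[of T P Q] mink_commute[of _ N])
  then have "mdet T P Q *\<^sub>R E = 0"
    using mcross_expansion[of E T P Q] by (simp add: mink_commute[of E])
  then have "E = 0" using assms(1) by simp
  then have "N = \<alpha> *\<^sub>R side_normal T P Q + \<beta> *\<^sub>R side_normal T Q P"
    unfolding E_def by (metis diff_diff_eq eq_iff_diff_eq_0)
  moreover have "\<alpha> \<ge> 0" "\<beta> \<ge> 0" using assms(3,4) d2 by (simp_all add: \<alpha>_def \<beta>_def divide_nonpos_pos)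
  ultimately show ?thesis using that by blast
qed

lemma sq_nonneg_comb_ge:
  fixes a1 a2 n11 n12 n22 \<alpha> \<beta> \<sigma> :: real
  assumes "a1 \<ge> 0" "a2 \<ge> 0" "\<sigma> * n11 \<le> a1\<^sup>2" "\<sigma> * n22 \<le> a2\<^sup>2" "\<sigma> \<ge> 0"
    "n12\<^sup>2 \<le> n11 * n22" "n11 \<ge> 0" "n22 \<ge> 0" "\<alpha> \<ge> 0" "\<beta> \<ge> 0"
  shows "\<sigma> * (\<alpha>\<^sup>2 * n11 + 2 * \<alpha> * \<beta> * n12 + \<beta>\<^sup>2 * n22) \<le> (\<alpha> * a1 + \<beta> * a2)\<^sup>2"
proof -
  have mixed: "\<sigma> * n12 \<le> a1 * a2"
  proof (cases "n12 \<le> 0")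
    case True
    then have "\<sigma> * n12 \<le> 0" using assms(5) by (simp add: mult_nonneg_nonpos)
    also have "0 \<le> a1 * a2" using assms(1,2) by simp
    finally show ?thesis .
  next
    case False
    have "(\<sigma> * n12)\<^sup>2 \<le> (\<sigma> * n11) * (\<sigma> * n22)"
    proof -
      have "(\<sigma> * n12)\<^sup>2 = \<sigma>\<^sup>2 * n12\<^sup>2" by (simp add: power_mult_distrib)
      also have "\<dots> \<le> \<sigma>\<^sup>2 * (n11 * n22)" using assms(6) by (simp add: mult_left_mono)
      finally show ?thesis by (simp add: power2_eq_square algebra_simps)
    qed
    also have "\<dots> \<le> a1\<^sup>2 * a2\<^sup>2" using assms(3,4,5,7,8) by (intro mult_mono) auto
    finally have "(\<sigma> * n12)\<^sup>2 \<le> (a1 * a2)\<^sup>2" by (simp add: power_mult_distrib)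
    then show ?thesis using assms(1,2) by (simp add: abs_le_square_iff[symmetric])
  qed
  have "(\<alpha> * a1 + \<beta> * a2)\<^sup>2 = \<alpha>\<^sup>2 * a1\<^sup>2 + 2 * \<alpha> * \<beta> * (a1 * a2) + \<beta>\<^sup>2 * a2\<^sup>2"
    by (simp add: power2_eq_square algebra_simps)
  moreover have "\<alpha>\<^sup>2 * (\<sigma> * n11) \<le> \<alpha>\<^sup>2 * a1\<^sup>2" "\<beta>\<^sup>2 * (\<sigma> * n22) \<le> \<beta>\<^sup>2 * a2\<^sup>2"
    using assms(3,4) by (simp_all add: mult_left_mono)
  moreover have "2 * \<alpha> * \<beta> * (\<sigma> * n12) \<le> 2 * \<alpha> * \<beta> * (a1 * a2)"
    using mixed assms(9,10) by (simp add: mult_left_mono)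
  ultimately show ?thesis by (simp add: algebra_simps)
qed

lemma far_side_nonneg_comb:
  assumes "mink T T < 0" "mink T N1 = 0" "mink T N2 = 0" "mink V V \<le> 0" "\<sigma> \<ge> 0"
    and "far_side \<sigma> N1 V" "far_side \<sigma> N2 V" and "\<alpha> \<ge> 0" "\<beta> \<ge> 0"
  shows "far_side \<sigma> (\<alpha> *\<^sub>R N1 + \<beta> *\<^sub>R N2) V"
proof -
  define N where "N = \<alpha> *\<^sub>R N1 + \<beta> *\<^sub>R N2"
  have NN: "mink N N = \<alpha>\<^sup>2 * mink N1 N1 + 2 * \<alpha> * \<beta> * mink N1 N2 + \<beta>\<^sup>2 * mink N2 N2"
    by (simp add: N_def mink_commute[of N2 N1] power2_eq_square algebra_simps)
  have VN: "- mink V N = \<alpha> * (- mink V N1) + \<beta> * (- mink V N2)"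
    by (simp add: N_def)
  have "\<sigma> * (- mink V V) \<ge> 0" using assms(4,5) by (simp add: mult_nonneg_nonpos)
  then have "\<sigma> * (- mink V V) * mink N N \<le> (- mink V N)\<^sup>2"
    unfolding NN VN
    using assms(6-9) mink_orthogonal_timelike_nonneg[OF assms(1,2)]
      mink_orthogonal_timelike_nonneg[OF assms(1,3)]
      mink_orthogonal_timelike_cauchy_schwarz[OF assms(1-3)]
    by (intro sq_nonneg_comb_ge) (auto simp: far_side_def)
  moreover have "\<alpha> * mink V N1 \<le> 0" "\<beta> * mink V N2 \<le> 0"
    using assms(6-9) by (simp_all add: far_side_def mult_nonneg_nonpos)
  then have "- mink V N \<ge> 0" unfolding VN by linarith
  ultimately show ?thesis by (simp add: far_side_def N_def[symmetric])
qed

text \<open>The normals of the supporting lines at a vertex \<open>T\<close> of a polygon with neighbouring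
  vertices \<open>P\<close> and \<open>Q\<close> form the cone spanned by the normals of the two edges at \<open>T\<close>.\<close>
lemma far_side_vertex:
  assumes "mink T T < 0" "mdet T P Q \<noteq> 0" "mink V V \<le> 0" "\<sigma> \<ge> 0"
    and "mink T N = 0" "mink P N \<le> 0" "mink Q N \<le> 0"
    and "far_side \<sigma> (side_normal T P Q) V" "far_side \<sigma> (side_normal T Q P) V"
  shows "far_side \<sigma> N V"
proof -
  obtain \<alpha> \<beta> where "\<alpha> \<ge> 0" "\<beta> \<ge> 0" "N = \<alpha> *\<^sub>R side_normal T P Q + \<beta> *\<^sub>R side_normal T Q P"
    using side_normal_cone[OF assms(2,5-7)] by blast
  then show ?thesis
    using far_side_nonneg_comb[OF assms(1) _ _ assms(3,4,8,9)] by simp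
qed

section \<open>The hyperboloid model of the Klein disk\<close>

lemma H2_iff: "x \<in> H2 \<longleftrightarrow> (Re x)\<^sup>2 + (Im x)\<^sup>2 < 1"
proof -
  have "x \<in> H2 \<longleftrightarrow> (cmod x)\<^sup>2 < 1" by (simp add: H2_def abs_square_less_1)
  then show ?thesis by (simp add: cmod_power2)
qed

text \<open>The Klein disk is identified with the hyperboloid \<open>mink X X = -1\<close>, \<open>mv0 X > 0\<close>
  by central projection from the origin to the plane \<open>mv0 = 1\<close>.\<close>
definition lift_den :: "complex \<Rightarrow> real" where
  "lift_den x = sqrt (1 - (Re x)\<^sup>2 - (Im x)\<^sup>2)"

definition lift :: "complex \<Rightarrow> mvec" where
  "lift x = MVec (1 / lift_den x) (Re x / lift_den x) (Im x / lift_den x)"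

definition proj :: "mvec \<Rightarrow> complex" where
  "proj V = Complex (mv1 V / mv0 V) (mv2 V / mv0 V)"

definition line_normal :: "complex \<Rightarrow> real \<Rightarrow> mvec" where
  "line_normal u c = MVec c (Re u) (Im u)"

lemma lift_den_pos: "x \<in> H2 \<Longrightarrow> lift_den x > 0"
  by (simp add: lift_den_def H2_iff)

lemma lift_den_sq: "x \<in> H2 \<Longrightarrow> (lift_den x)\<^sup>2 = 1 - (Re x)\<^sup>2 - (Im x)\<^sup>2"
  by (simp add: lift_den_def H2_iff)

lemma mv0_lift_pos: "x \<in> H2 \<Longrightarrow> mv0 (lift x) > 0"
  using lift_den_pos by (simp add: lift_def)

lemma mink_lift:
  assumes "x \<in> H2" "y \<in> H2"
  shows "mink (lift x) (lift y) = - (1 - inner x y) / (lift_den x * lift_den y)"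
  using lift_den_pos[OF assms(1)] lift_den_pos[OF assms(2)]
  by (simp add: mink_def lift_def inner_complex_def field_simps)

lemma mink_lift_self: "x \<in> H2 \<Longrightarrow> mink (lift x) (lift x) = -1"
  using lift_den_pos[of x] lift_den_sq[of x]
  by (simp add: mink_def lift_def field_simps power2_eq_square)

lemma hdist_lift:
  assumes "p \<in> H2" "q \<in> H2"
  shows "hdist p q = arcosh (- mink (lift p) (lift q))"
proof -
  have "sqrt ((1 - (norm p)\<^sup>2) * (1 - (norm q)\<^sup>2)) = lift_den p * lift_den q"
    by (simp only: real_sqrt_mult cmod_power2 lift_den_def diff_diff_eq)
  then show ?thesis by (simp add: hdist_def mink_lift assms minus_divide_left)
qed

lemma mink_lift_line_normal:
  "x \<in> H2 \<Longrightarrow> mink (lift x) (line_normal u c) = (inner u x - c) / lift_den x"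
  using lift_den_pos[of x] by (simp add: mink_def lift_def line_normal_def inner_complex_def field_simps)

lemma line_normal_components: "line_normal (Complex (mv1 N) (mv2 N)) (mv0 N) = N"
  by (cases N) (simp add: line_normal_def)

lemma mink_lift_nonpos_iff:
  "x \<in> H2 \<Longrightarrow> mink (lift x) N \<le> 0 \<longleftrightarrow> inner (Complex (mv1 N) (mv2 N)) x \<le> mv0 N"
  using mink_lift_line_normal[of x "Complex (mv1 N) (mv2 N)" "mv0 N"] lift_den_pos[of x]
  by (simp add: line_normal_components divide_le_0_iff)

lemma mink_lift_eq_0_iff:
  "x \<in> H2 \<Longrightarrow> mink (lift x) N = 0 \<longleftrightarrow> inner (Complex (mv1 N) (mv2 N)) x = mv0 N"
  using mink_lift_line_normal[of x "Complex (mv1 N) (mv2 N)" "mv0 N"] lift_den_pos[of x]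
  by (simp add: line_normal_components)

lemma proj_in_H2:
  assumes "mv0 V > 0" "mink V V < 0"
  shows "proj V \<in> H2"
proof -
  have "(mv1 V)\<^sup>2 + (mv2 V)\<^sup>2 < (mv0 V)\<^sup>2" using assms(2) by (simp add: mink_def power2_eq_square)
  then have "(mv1 V / mv0 V)\<^sup>2 + (mv2 V / mv0 V)\<^sup>2 < 1" using assms(1)
    by (simp add: power_divide add_divide_distrib[symmetric])
  then show ?thesis by (simp add: H2_iff proj_def)
qed

lemma lift_proj:
  assumes "mv0 V > 0" "mink V V < 0"
  shows "lift (proj V) = (1 / sqrt (- mink V V)) *\<^sub>R V"
proof -
  have "1 - (Re (proj V))\<^sup>2 - (Im (proj V))\<^sup>2 = (- mink V V) / (mv0 V)\<^sup>2"
    using assms(1) by (simp add: proj_def mink_def field_simps power2_eq_square)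
  then have "lift_den (proj V) = sqrt ((- mink V V) / (mv0 V)\<^sup>2)"
    by (simp only: lift_den_def)
  also have "\<dots> = sqrt (- mink V V) / sqrt ((mv0 V)\<^sup>2)" by (rule real_sqrt_divide)
  finally have den: "lift_den (proj V) = sqrt (- mink V V) / mv0 V" using assms(1) by simp
  have "sqrt (- mink V V) > 0" using assms(2) by simp
  then show ?thesis unfolding lift_def den using assms(1)
    by (simp add: proj_def mvec.expand field_simps)
qed

lemma klein_ineq:
  fixes a b c d :: real
  assumes "a\<^sup>2 + b\<^sup>2 < 1" "c\<^sup>2 + d\<^sup>2 < 1"
  shows "((a - c)\<^sup>2 + (b - d)\<^sup>2) * (1 - c\<^sup>2 - d\<^sup>2)
           \<le> (1 - a * c - b * d)\<^sup>2 - (1 - a\<^sup>2 - b\<^sup>2) * (1 - c\<^sup>2 - d\<^sup>2)"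
    and "1 - a * c - b * d > 0"
proof -
  have "((a - c)\<^sup>2 + (b - d)\<^sup>2) * (c\<^sup>2 + d\<^sup>2) - (a * d - b * c)\<^sup>2 = ((a - c) * c + (b - d) * d)\<^sup>2"
    by (simp add: power2_eq_square algebra_simps)
  then have "(a * d - b * c)\<^sup>2 \<le> ((a - c)\<^sup>2 + (b - d)\<^sup>2) * (c\<^sup>2 + d\<^sup>2)"
    by (metis diff_ge_0_iff_ge zero_le_power2)
  moreover have "(1 - a * c - b * d)\<^sup>2 - (1 - a\<^sup>2 - b\<^sup>2) * (1 - c\<^sup>2 - d\<^sup>2)
      = (a - c)\<^sup>2 + (b - d)\<^sup>2 - (a * d - b * c)\<^sup>2"
    by (simp add: power2_eq_square algebra_simps)
  ultimately show "((a - c)\<^sup>2 + (b - d)\<^sup>2) * (1 - c\<^sup>2 - d\<^sup>2)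
      \<le> (1 - a * c - b * d)\<^sup>2 - (1 - a\<^sup>2 - b\<^sup>2) * (1 - c\<^sup>2 - d\<^sup>2)"
    by (simp add: algebra_simps)
  have "2 * (a * c + b * d) \<le> a\<^sup>2 + b\<^sup>2 + c\<^sup>2 + d\<^sup>2"
    using sum_power2_ge_zero[of "a - c" "b - d"] by (simp add: power2_eq_square algebra_simps)
  then show "1 - a * c - b * d > 0" using assms by argo
qed

lemma mink_lift_le:
  assumes "p \<in> H2" "q \<in> H2"
  shows "- mink (lift p) (lift q) \<ge> 1"
    and "p \<noteq> q \<Longrightarrow> - mink (lift p) (lift q) > 1"
proof -
  define a b c d where "a = Re p" "b = Im p" "c = Re q" "d = Im q"
  have h: "a\<^sup>2 + b\<^sup>2 < 1" "c\<^sup>2 + d\<^sup>2 < 1" using assms by (auto simp: H2_iff a_b_c_d_def)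
  note k = klein_ineq[OF h]
  have den: "lift_den p * lift_den q = sqrt ((1 - a\<^sup>2 - b\<^sup>2) * (1 - c\<^sup>2 - d\<^sup>2))"
    by (simp add: lift_den_def real_sqrt_mult a_b_c_d_def)
  have den_pos: "lift_den p * lift_den q > 0" using lift_den_pos assms by simp
  have eq: "- mink (lift p) (lift q) = (1 - a * c - b * d) / (lift_den p * lift_den q)"
    by (simp add: mink_lift assms inner_complex_def minus_divide_left a_b_c_d_def)
  have "(1 - a\<^sup>2 - b\<^sup>2) * (1 - c\<^sup>2 - d\<^sup>2) \<le> (1 - a * c - b * d)\<^sup>2"
    using k(1) h(2) by (smt (verit) mult_nonneg_nonneg zero_le_power2 sum_power2_ge_zero)
  then have "lift_den p * lift_den q \<le> 1 - a * c - b * d"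
    unfolding den using k(2) by (intro real_le_lsqrt) auto
  then show "- mink (lift p) (lift q) \<ge> 1" using den_pos by (simp add: eq)
  assume "p \<noteq> q"
  then have "(a - c)\<^sup>2 + (b - d)\<^sup>2 > 0"
    by (auto simp: a_b_c_d_def complex_eq_iff sum_power2_gt_zero_iff)
  then have "(1 - a\<^sup>2 - b\<^sup>2) * (1 - c\<^sup>2 - d\<^sup>2) < (1 - a * c - b * d)\<^sup>2"
    using k(1) h(2) by (smt (verit) mult_pos_pos)
  then have "lift_den p * lift_den q < sqrt ((1 - a * c - b * d)\<^sup>2)"
    unfolding den by (rule real_sqrt_less_mono)
  then show "- mink (lift p) (lift q) > 1" using den_pos k(2) by (simp add: eq)
qed

lemma hdist_nonneg: "p \<in> H2 \<Longrightarrow> q \<in> H2 \<Longrightarrow> hdist p q \<ge> 0"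
  using mink_lift_le(1) by (simp add: hdist_lift)

lemma hdist_ge_arcosh:
  assumes "p \<in> H2" "q \<in> H2" "\<sigma> \<ge> 0" "1 + \<sigma> \<le> (mink (lift p) (lift q))\<^sup>2"
  shows "hdist p q \<ge> arcosh (sqrt (1 + \<sigma>))"
proof -
  have ge1: "- mink (lift p) (lift q) \<ge> 1" by (rule mink_lift_le(1)[OF assms(1,2)])
  have "sqrt (1 + \<sigma>) \<le> sqrt ((mink (lift p) (lift q))\<^sup>2)" using assms(4) by (rule real_sqrt_le_mono)
  then have "sqrt (1 + \<sigma>) \<le> - mink (lift p) (lift q)" using ge1 by simp
  moreover have "sqrt (1 + \<sigma>) \<ge> 1" using assms(3) by simp
  ultimately show ?thesis using ge1 by (simp add: hdist_lift assms(1,2) not_less[symmetric])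
qed

lemma hdist_le_arcosh:
  assumes "p \<in> H2" "q \<in> H2" "\<sigma> \<ge> 0" "(mink (lift p) (lift q))\<^sup>2 \<le> 1 + \<sigma>"
  shows "hdist p q \<le> arcosh (sqrt (1 + \<sigma>))"
proof -
  have ge1: "- mink (lift p) (lift q) \<ge> 1" by (rule mink_lift_le(1)[OF assms(1,2)])
  have "sqrt ((mink (lift p) (lift q))\<^sup>2) \<le> sqrt (1 + \<sigma>)" using assms(4) by (rule real_sqrt_le_mono)
  then have "- mink (lift p) (lift q) \<le> sqrt (1 + \<sigma>)" using ge1 by simp
  moreover have "sqrt (1 + \<sigma>) \<ge> 1" using assms(3) by simp
  ultimately show ?thesis using ge1 by (simp add: hdist_lift assms(1,2) not_less[symmetric])
qed

definition cross2 :: "complex \<Rightarrow> complex \<Rightarrow> real" where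
  "cross2 w z = Re w * Im z - Im w * Re z"

lemma collinear_iff_cross2: "collinear {p, q, r} \<longleftrightarrow> cross2 (q - p) (r - p) = 0"
proof -
  have "collinear {p, q, r} = collinear {q, p, r}" by (simp add: insert_commute)
  also have "\<dots> = collinear {0, q - p, r - p}" by (rule collinear_3) simp
  also have "\<dots> \<longleftrightarrow> (r - p) / (q - p) \<in> \<real>" by (rule collinear_iff_Reals)
  also have "\<dots> \<longleftrightarrow> cross2 (q - p) (r - p) = 0"
  proof (cases "q = p")
    case False
    then have "(r - p) / (q - p) \<in> \<real> \<longleftrightarrow> Im (r - p) * Re (q - p) - Re (r - p) * Im (q - p) = 0"
      by (auto simp: complex_is_Real_iff Im_divide complex_eq_iff)
    then show ?thesis by (auto simp: cross2_def algebra_simps)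
  qed (simp add: cross2_def)
  finally show ?thesis .
qed

lemma mdet_lift:
  assumes "x \<in> H2" "y \<in> H2" "z \<in> H2"
  shows "mdet (lift x) (lift y) (lift z) = cross2 (y - x) (z - x) / (lift_den x * lift_den y * lift_den z)"
  using lift_den_pos[OF assms(1)] lift_den_pos[OF assms(2)] lift_den_pos[OF assms(3)]
  by (simp add: mdet_def lift_def cross2_def field_simps)

lemma mdet_lift_eq_0_iff:
  assumes "x \<in> H2" "y \<in> H2" "z \<in> H2"
  shows "mdet (lift x) (lift y) (lift z) = 0 \<longleftrightarrow> collinear {x, y, z}"
  using lift_den_pos[OF assms(1)] lift_den_pos[OF assms(2)] lift_den_pos[OF assms(3)]
  by (simp add: mdet_lift assms collinear_iff_cross2)

section \<open>Lines, distances and widths\<close>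

definition chord :: "complex \<Rightarrow> real \<Rightarrow> complex set" where
  "chord u c = {x \<in> H2. inner u x = c}"

lemma hline_chord:
  assumes "u \<noteq> 0" "a \<in> H2" "inner u a = c"
  shows "hline (chord u c)"
proof -
  obtain e where e: "e > 0" "ball a e \<subseteq> H2"
    using assms(2) unfolding H2_def by (meson open_ball openE)
  define \<delta> where "\<delta> = e / (2 * cmod u)"
  have \<delta>: "\<delta> > 0" using e assms(1) by (simp add: \<delta>_def)
  define b where "b = a + of_real \<delta> * (\<i> * u)"
  have "dist a b = \<delta> * cmod u" using \<delta> by (simp add: b_def dist_norm norm_mult)
  also have "\<dots> = e / 2" using assms(1) by (simp add: \<delta>_def)
  finally have "dist a b = e / 2" .
  then have b: "b \<in> H2" using e by auto
  have ab: "a \<noteq> b" using \<delta> assms(1) by (simp add: b_def)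
  have "x \<in> affine hull {a, b} \<longleftrightarrow> inner u x = c" for x
  proof -
    have "cross2 (b - a) (x - a) = - \<delta> * (inner u x - c)"
      unfolding assms(3)[symmetric] by (simp add: b_def cross2_def inner_complex_def algebra_simps)
    then show ?thesis using collinear_3_affine_hull[OF ab] collinear_iff_cross2[of a b x] \<delta> by simp
  qed
  then have "chord u c = affine hull {a, b} \<inter> H2" by (auto simp: chord_def)
  then show ?thesis unfolding hline_def using assms(2) b ab by blast
qed

lemma closure_chord_subset: "closure (chord u c) \<subseteq> {x. inner u x = c} \<inter> cball 0 1"
  by (rule closure_minimal) (auto simp: chord_def H2_def intro: closed_Int closed_hyperplane)

lemma supporting_chordE:
  assumes "supporting H K"
  obtains u c where "u \<noteq> 0" "H = chord u c" "\<forall>x\<in>K. inner u x \<le> c" "chord u c \<inter> K \<noteq> {}"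
  using assms unfolding supporting_def chord_def by blast

lemma supporting_chordI:
  assumes "u \<noteq> 0" "\<forall>x\<in>K. inner u x \<le> c" "p \<in> K" "inner u p = c" "p \<in> H2"
  shows "supporting (chord u c) K"
  unfolding supporting_def using hline_chord[OF assms(1,5,4)] assms by (auto simp: chord_def)

lemma supporting_subset_H2: "supporting H K \<Longrightarrow> H \<subseteq> H2"
  by (auto simp: supporting_def hline_def)

lemma supporting_convex_hull_vertex:
  assumes "\<forall>x\<in>convex hull S. inner u x \<le> c" "chord u c \<inter> convex hull S \<noteq> {}"
  shows "\<exists>v\<in>S. inner u v = c"
proof (rule ccontr)
  assume "\<not> ?thesis"
  then have "\<forall>v\<in>S. inner u v < c" using assms(1) hull_inc[of _ S] by (metis order_le_less)
  then have "convex hull S \<subseteq> {x. inner u x < c}"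
    by (intro hull_minimal) (auto intro: convex_halfspace_lt)
  then show False using assms(2) by (auto simp: chord_def)
qed

lemma mink_line_normal_pos:
  assumes "u \<noteq> 0" "p \<in> H2" "inner u p = c"
  shows "mink (line_normal u c) (line_normal u c) > 0"
proof -
  have "c\<^sup>2 = (Re u * Re p + Im u * Im p)\<^sup>2" using assms(3) by (simp add: inner_complex_def)
  also have "\<dots> \<le> ((Re u)\<^sup>2 + (Im u)\<^sup>2) * ((Re p)\<^sup>2 + (Im p)\<^sup>2)"
    by (rule sum_products_sq_le)
  also have "\<dots> < (Re u)\<^sup>2 + (Im u)\<^sup>2"
    using assms(1,2) by (simp add: H2_iff complex_eq_iff sum_power2_gt_zero_iff)
  finally show ?thesis by (simp add: mink_def line_normal_def power2_eq_square)
qed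

lemma mink_lift_line_normal_sq:
  "x \<in> H2 \<Longrightarrow> (mink (lift x) (line_normal u c))\<^sup>2 = (inner u x - c)\<^sup>2 / (1 - (Re x)\<^sup>2 - (Im x)\<^sup>2)"
  by (simp add: mink_lift_line_normal power_divide lift_den_sq)

text \<open>\<open>cosh\<^sup>2\<close> of the distance between a point \<open>P\<close> of the line \<open>n\<^sup>\<bottom>\<close> and a point \<open>Q\<close> is at
  least \<open>1 + sinh\<^sup>2\<close> of the distance from \<open>Q\<close> to the line.\<close>
lemma mink_sq_ge_line_dist:
  assumes "mink P P = -1" "mink Q Q = -1" "mink P n = 0" "mink n n > 0"
  shows "1 + (mink Q n)\<^sup>2 / mink n n \<le> (mink P Q)\<^sup>2"
proof -
  have "mink n n + (mink Q n)\<^sup>2 + (mdet P Q n)\<^sup>2 = (mink P Q)\<^sup>2 * mink n n"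
    using mink_gram_det[of P Q n] assms(1-3)
    by (simp add: mink_commute[of n Q] power2_eq_square algebra_simps)
  then have "mink n n + (mink Q n)\<^sup>2 \<le> (mink P Q)\<^sup>2 * mink n n"
    by (metis le_add_same_cancel1 zero_le_power2)
  then show ?thesis using assms(4) by (simp add: field_simps)
qed

lemma hsetdist_ge:
  assumes "H \<noteq> {}" "H' \<noteq> {}" "\<And>p q. p \<in> H \<Longrightarrow> q \<in> H' \<Longrightarrow> s \<le> hdist p q"
  shows "s \<le> hsetdist H H'"
  unfolding hsetdist_def by (intro cINF_greatest assms)

lemma hsetdist_le:
  assumes "H \<subseteq> H2" "H' \<subseteq> H2" "p \<in> H" "q \<in> H'"
  shows "hsetdist H H' \<le> hdist p q"
proof -
  have bdd: "bdd_below (hdist x ` H')" if "x \<in> H" for x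
    using that assms hdist_nonneg by (intro bdd_belowI[of _ 0]) auto
  have "0 \<le> (INF y\<in>H'. hdist x y)" if "x \<in> H" for x
    using that assms hdist_nonneg by (intro cINF_greatest) auto
  then have "bdd_below ((\<lambda>x. INF y\<in>H'. hdist x y) ` H)" by (intro bdd_belowI[of _ 0]) auto
  then have "hsetdist H H' \<le> (INF y\<in>H'. hdist p y)"
    unfolding hsetdist_def using assms(3) by (rule cINF_lower)
  also have "\<dots> \<le> hdist p q" using bdd[OF assms(3)] assms(4) by (rule cINF_lower)
  finally show ?thesis .
qed

text \<open>For \<open>k > 0\<close> the curve \<open>g x = k\<close> is the hypercycle (in the Klein model an ellipse
  touching the unit circle at the ends of the chord) of points \<open>x\<close> with
  \<open>(inner u x - c)\<^sup>2 / (1 - |x|\<^sup>2) = k\<close>. Its tangent at \<open>z\<close> has normal \<open>w\<close>.\<close>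
lemma hypercycle_tangent:
  fixes u z p :: complex and c k :: real
  defines "g \<equiv> \<lambda>x. (inner u x - c)\<^sup>2 + k * ((Re x)\<^sup>2 + (Im x)\<^sup>2)"
    and "w \<equiv> k *\<^sub>R z - (c - inner u z) *\<^sub>R u"
  assumes k: "k > 0" and u: "u \<noteq> 0" and z: "z \<in> H2" "g z = k" "inner u z \<noteq> c"
    and p: "p \<in> H2" "inner u p = c"
  shows "w \<noteq> 0"
    and "\<And>x. g x \<le> k \<Longrightarrow> inner w x \<le> inner w z"
    and "\<And>q. inner w q = inner w z \<Longrightarrow> k \<le> g q"
    and "ultraparallel (chord u c) (chord w (inner w z))"
proof -
  have expand: "g x = k + 2 * inner w (x - z) + (inner u (x - z))\<^sup>2 + k * ((Re (x - z))\<^sup>2 + (Im (x - z))\<^sup>2)"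
    for x
    using z(2) by (simp add: g_def w_def inner_complex_def power2_eq_square algebra_simps)
  have rest_nonneg: "0 \<le> (inner u (x - z))\<^sup>2 + k * ((Re (x - z))\<^sup>2 + (Im (x - z))\<^sup>2)" for x
    using k by simp
  show "w \<noteq> 0"
  proof
    assume "w = 0"
    then have "k \<le> g p" using expand[of p] rest_nonneg[of p] by simp
    moreover have "k * ((Re p)\<^sup>2 + (Im p)\<^sup>2) < k" using p(1) k by (simp add: H2_iff)
    ultimately show False using p(2) by (simp add: g_def)
  qed
  show "inner w x \<le> inner w z" if "g x \<le> k" for x
    using that expand[of x] rest_nonneg[of x] by (simp add: inner_diff_right)
  show "k \<le> g q" if "inner w q = inner w z" for q
    using that expand[of q] rest_nonneg[of q] by (simp add: inner_diff_right)
  have "x = z" if "inner u x = c" "cmod x \<le> 1" "inner w x = inner w z" for x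
  proof -
    have "(Re x)\<^sup>2 + (Im x)\<^sup>2 \<le> 1" using that(2) by (simp add: cmod_power2[symmetric] abs_square_le_1)
    then have "g x \<le> k" using that(1) k by (simp add: g_def mult_left_le)
    then have "k * ((Re (x - z))\<^sup>2 + (Im (x - z))\<^sup>2) \<le> 0"
      using expand[of x] that(3) by (simp add: inner_diff_right) (smt (verit) zero_le_power2)
    then have "(Re (x - z))\<^sup>2 + (Im (x - z))\<^sup>2 = 0"
      using k by (simp add: mult_le_0_iff sum_power2_le_zero_iff)
    then show "x = z" by (simp add: complex_eq_iff)
  qed
  then have "closure (chord u c) \<inter> closure (chord w (inner w z)) = {}"
    using closure_chord_subset[of u c] closure_chord_subset[of w "inner w z"] z(3) by fastforce
  moreover have "hline (chord u c)" by (rule hline_chord[OF u p])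
  moreover have "hline (chord w (inner w z))" by (rule hline_chord[OF \<open>w \<noteq> 0\<close> z(1)]) simp
  ultimately show "ultraparallel (chord u c) (chord w (inner w z))" by (simp add: ultraparallel_def)
qed

lemma mink_lift_line_normal_sq_compare:
  assumes "x \<in> H2"
  shows "(mink (lift x) (line_normal u c))\<^sup>2 \<le> k \<longleftrightarrow> (inner u x - c)\<^sup>2 + k * ((Re x)\<^sup>2 + (Im x)\<^sup>2) \<le> k"
    and "k \<le> (mink (lift x) (line_normal u c))\<^sup>2 \<longleftrightarrow> k \<le> (inner u x - c)\<^sup>2 + k * ((Re x)\<^sup>2 + (Im x)\<^sup>2)"
proof -
  have "1 - (Re x)\<^sup>2 - (Im x)\<^sup>2 > 0" using assms by (simp add: H2_iff)
  then show "(mink (lift x) (line_normal u c))\<^sup>2 \<le> k \<longleftrightarrow> (inner u x - c)\<^sup>2 + k * ((Re x)\<^sup>2 + (Im x)\<^sup>2) \<le> k"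
    and "k \<le> (mink (lift x) (line_normal u c))\<^sup>2 \<longleftrightarrow> k \<le> (inner u x - c)\<^sup>2 + k * ((Re x)\<^sup>2 + (Im x)\<^sup>2)"
    by (simp_all add: mink_lift_line_normal_sq assms divide_le_eq le_divide_eq algebra_simps)
qed

lemma exists_farthest_point:
  assumes "compact K" "K \<subseteq> H2" "K \<noteq> {}"
  obtains z where "z \<in> K" "\<forall>x\<in>K. (mink (lift x) N)\<^sup>2 \<le> (mink (lift z) N)\<^sup>2"
proof -
  have "continuous_on K (\<lambda>x. (mink (lift x) N)\<^sup>2)"
    unfolding mink_def lift_def lift_den_def mvec.sel
    by (intro continuous_intros) (use assms(2) in \<open>auto simp: H2_iff subset_iff dest!: bspec\<close>)
  then show ?thesis using continuous_attains_sup[OF assms(1,3)] that by blast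
qed

text \<open>The supporting line of \<open>K\<close> tangent to the hypercycle through a farthest point of \<open>K\<close>
  from the line \<open>chord u c\<close> is ultraparallel to it and at least as far away as \<open>z0\<close>.\<close>
lemma far_ultraparallel_supporting:
  fixes u :: complex and c :: real
  defines "n \<equiv> line_normal u c"
  assumes K: "compact K" "K \<subseteq> H2" and u: "u \<noteq> 0" and half: "\<forall>x\<in>K. inner u x \<le> c"
    and p: "p \<in> H2" "inner u p = c" and z0: "z0 \<in> K" and \<sigma>: "\<sigma> > 0"
    and far: "\<sigma> * mink n n \<le> (mink (lift z0) n)\<^sup>2"
  shows "\<exists>H'. supporting H' K \<and> ultraparallel (chord u c) H'
    \<and> arcosh (sqrt (1 + \<sigma>)) \<le> hsetdist (chord u c) H'"
proof -
  define f where "f x = (mink (lift x) n)\<^sup>2" for x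
  obtain z where z: "z \<in> K" "\<forall>x\<in>K. f x \<le> f z"
    using exists_farthest_point[OF K] z0 unfolding f_def by blast
  define k where "k = f z"
  have \<nu>: "mink n n > 0" unfolding n_def by (rule mink_line_normal_pos[OF u p])
  have "\<sigma> * mink n n \<le> k" using far z z0 by (auto simp: k_def f_def)
  then have k: "k > 0" using \<sigma> \<nu> by (smt (verit) mult_pos_pos)
  have zH: "z \<in> H2" using z K(2) by auto
  have g_z: "(inner u z - c)\<^sup>2 + k * ((Re z)\<^sup>2 + (Im z)\<^sup>2) = k"
    using mink_lift_line_normal_sq_compare[OF zH, where u = u and c = c and k = k] by (simp add: k_def f_def n_def)
  have "inner u z \<noteq> c" using k by (auto simp: k_def f_def n_def mink_lift_line_normal zH)
  note tangent = hypercycle_tangent[OF k u zH g_z this p]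
  define w where "w = k *\<^sub>R z - (c - inner u z) *\<^sub>R u"
  have "\<forall>x\<in>K. inner w x \<le> inner w z"
    using z K(2) tangent(2) mink_lift_line_normal_sq_compare(1)
    by (auto simp: w_def k_def f_def n_def subset_iff)
  then have "supporting (chord w (inner w z)) K"
    using tangent(1) z(1) zH by (intro supporting_chordI) (auto simp: w_def)
  moreover have "arcosh (sqrt (1 + \<sigma>)) \<le> hsetdist (chord u c) (chord w (inner w z))"
  proof (rule hsetdist_ge)
    show "chord u c \<noteq> {}" "chord w (inner w z) \<noteq> {}" using p zH by (auto simp: chord_def)
  next
    fix p' q assume p': "p' \<in> chord u c" and q: "q \<in> chord w (inner w z)"
    have p'H: "p' \<in> H2" "inner u p' = c" and qH: "q \<in> H2" using p' q by (auto simp: chord_def)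
    have "k \<le> f q"
      using tangent(3)[of q] q mink_lift_line_normal_sq_compare(2)[OF qH]
      by (auto simp: w_def chord_def f_def n_def)
    then have "1 + \<sigma> \<le> 1 + (mink (lift q) n)\<^sup>2 / mink n n"
      using \<open>\<sigma> * mink n n \<le> k\<close> \<nu> by (simp add: f_def le_divide_eq)
    also have "\<dots> \<le> (mink (lift p') (lift q))\<^sup>2"
      using p'H qH \<nu> by (intro mink_sq_ge_line_dist)
        (simp_all add: mink_lift_self n_def mink_lift_line_normal)
    finally show "arcosh (sqrt (1 + \<sigma>)) \<le> hdist p' q"
      using hdist_ge_arcosh[OF p'H(1) qH] \<sigma> by simp
  qed
  ultimately show ?thesis using tangent(4) by (auto simp: w_def)
qed

lemma perpendicular_foot:
  fixes u :: complex and c :: real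
  defines "n \<equiv> line_normal u c"
  assumes u: "u \<noteq> 0" and p: "p \<in> H2" "inner u p = c" and q: "q \<in> H2"
  obtains f where "f \<in> chord u c" "(mink (lift f) (lift q))\<^sup>2 = 1 + (mink (lift q) n)\<^sup>2 / mink n n"
proof -
  define Q where "Q = lift q"
  define \<beta> \<nu> where "\<beta> = mink Q n" and "\<nu> = mink n n"
  have \<nu>: "\<nu> > 0" unfolding \<nu>_def n_def by (rule mink_line_normal_pos[OF u p])
  have QQ: "mink Q Q = -1" using q by (simp add: Q_def mink_lift_self)
  define P where "P = \<nu> *\<^sub>R Q - \<beta> *\<^sub>R n"
  have Pn: "mink P n = 0" by (simp add: P_def \<beta>_def \<nu>_def)
  have PQ: "mink P Q = - \<nu> - \<beta>\<^sup>2" using QQ by (simp add: P_def \<beta>_def mink_commute[of n] power2_eq_square)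
  have PP: "mink P P = - (\<nu> * (\<nu> + \<beta>\<^sup>2))"
    using QQ by (simp add: P_def \<beta>_def \<nu>_def mink_commute[of n Q] power2_eq_square algebra_simps)
  have \<beta>\<nu>: "\<nu> + \<beta>\<^sup>2 > 0" using \<nu> by (smt (verit) zero_le_power2)
  have P_timelike: "mink P P < 0" using \<nu> \<beta>\<nu> by (simp add: PP)
  have "mink P Q < 0" using \<nu> \<beta>\<nu> by (simp add: PQ)
  moreover have "mink Q Q < 0" "mv0 Q > 0" using q QQ by (simp_all add: Q_def mv0_lift_pos)
  ultimately have "mv0 P > 0" using P_timelike by (intro mink_timelike_same_cone[of Q P])
  note P = this P_timelike
  define f where "f = proj P"
  have fH: "f \<in> H2" unfolding f_def by (rule proj_in_H2[OF P])
  have lift_f: "lift f = (1 / sqrt (- mink P P)) *\<^sub>R P" unfolding f_def by (rule lift_proj[OF P])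
  have "mink (lift f) (line_normal u c) = 0" by (simp add: lift_f Pn flip: n_def)
  then have "f \<in> chord u c" using fH lift_den_pos[OF fH] by (simp add: chord_def mink_lift_line_normal)
  have "(mink (lift f) (lift q))\<^sup>2 = (mink P Q)\<^sup>2 / (- mink P P)"
    using P_timelike by (simp add: lift_f Q_def power_divide power_mult_distrib)
  also have "\<dots> = (\<nu> + \<beta>\<^sup>2) * (\<nu> + \<beta>\<^sup>2) / (\<nu> * (\<nu> + \<beta>\<^sup>2))"
    by (simp add: PQ PP power2_eq_square algebra_simps)
  also have "\<dots> = 1 + \<beta>\<^sup>2 / \<nu>" using \<nu> \<beta>\<nu> by (simp add: add_divide_distrib)
  finally show ?thesis using that \<open>f \<in> chord u c\<close> by (simp add: \<beta>_def \<nu>_def Q_def)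
qed

lemma hsetdist_chord_le:
  fixes u :: complex and c :: real
  defines "n \<equiv> line_normal u c"
  assumes "u \<noteq> 0" "p \<in> H2" "inner u p = c" and "H' \<subseteq> H2" "q \<in> H'" and "\<sigma> \<ge> 0"
    and "(mink (lift q) n)\<^sup>2 \<le> \<sigma> * mink n n"
  shows "hsetdist (chord u c) H' \<le> arcosh (sqrt (1 + \<sigma>))"
proof -
  have q: "q \<in> H2" using assms(5,6) by auto
  obtain f where f: "f \<in> chord u c" "(mink (lift f) (lift q))\<^sup>2 = 1 + (mink (lift q) n)\<^sup>2 / mink n n"
    using perpendicular_foot[OF assms(2-4) q] unfolding n_def by blast
  have "mink n n > 0" unfolding n_def by (rule mink_line_normal_pos[OF assms(2-4)])
  then have "(mink (lift f) (lift q))\<^sup>2 \<le> 1 + \<sigma>" using f(2) assms(8) by (simp add: divide_le_eq)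
  then have "hdist f q \<le> arcosh (sqrt (1 + \<sigma>))"
    using f(1) q assms(7) by (intro hdist_le_arcosh) (auto simp: chord_def)
  moreover have "hsetdist (chord u c) H' \<le> hdist f q"
    using f(1) assms(5,6) by (intro hsetdist_le) (auto simp: chord_def)
  ultimately show ?thesis by simp
qed

lemma hdist_bounded_on_compact:
  assumes "compact K" "K \<subseteq> H2"
  obtains B where "\<And>p q. p \<in> K \<Longrightarrow> q \<in> K \<Longrightarrow> hdist p q \<le> B"
proof -
  have "continuous_on (K \<times> K) (\<lambda>z. - mink (lift (fst z)) (lift (snd z)))"
    unfolding mink_def lift_def lift_den_def mvec.sel
    by (intro continuous_intros) (use assms(2) in \<open>auto simp: H2_iff subset_iff dest!: bspec\<close>)
  then have "continuous_on (K \<times> K) (\<lambda>z. arcosh (- mink (lift (fst z)) (lift (snd z))))"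
    by (rule continuous_on_compose2[OF continuous_on_arcosh[OF order.refl]])
      (use assms(2) mink_lift_le(1) in fastforce)
  then have "continuous_on (K \<times> K) (\<lambda>z. hdist (fst z) (snd z))"
    by (rule continuous_on_cong[THEN iffD1, rotated 2]) (use assms(2) in \<open>auto simp: hdist_lift subset_iff\<close>)
  then have "compact ((\<lambda>z. hdist (fst z) (snd z)) ` (K \<times> K))"
    using assms(1) by (intro compact_continuous_image compact_Times)
  then obtain B where "\<forall>t \<in> (\<lambda>z. hdist (fst z) (snd z)) ` (K \<times> K). t \<le> B"
    using compact_imp_bounded bounded_real by (metis abs_le_D1)
  then have "hdist p q \<le> B" if "p \<in> K" "q \<in> K" for p q using that by force
  then show ?thesis using that by blast
qed

lemma bdd_above_widths:
  assumes "compact K" "K \<subseteq> H2" "supporting H K"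
  shows "bdd_above (hsetdist H ` {H'. supporting H' K \<and> ultraparallel H H'})"
proof -
  obtain B where B: "\<And>p q. p \<in> K \<Longrightarrow> q \<in> K \<Longrightarrow> hdist p q \<le> B"
    using hdist_bounded_on_compact[OF assms(1,2)] by blast
  obtain p where p: "p \<in> H" "p \<in> K" using assms(3) by (auto simp: supporting_def)
  show ?thesis
  proof (rule bdd_aboveI2)
    fix H' assume "H' \<in> {H'. supporting H' K \<and> ultraparallel H H'}"
    then have H': "supporting H' K" by simp
    then obtain q where "q \<in> H'" "q \<in> K" by (auto simp: supporting_def)
    then have "hsetdist H H' \<le> hdist p q"
      using p supporting_subset_H2[OF assms(3)] supporting_subset_H2[OF H'] by (intro hsetdist_le)
    also have "\<dots> \<le> B" using B p \<open>q \<in> K\<close> by simp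
    finally show "hsetdist H H' \<le> B" .
  qed
qed

lemma hwidth_ge_arcosh:
  fixes u :: complex and c :: real
  defines "n \<equiv> line_normal u c"
  assumes "compact K" "K \<subseteq> H2" "u \<noteq> 0" "\<forall>x\<in>K. inner u x \<le> c" "p \<in> K" "inner u p = c"
    and "z \<in> K" "\<sigma> > 0" "\<sigma> * mink n n \<le> (mink (lift z) n)\<^sup>2"
  shows "arcosh (sqrt (1 + \<sigma>)) \<le> hwidth (chord u c) K"
proof -
  have p: "p \<in> H2" using assms(3,6) by auto
  have sup: "supporting (chord u c) K" by (rule supporting_chordI[OF assms(4-7) p])
  obtain H' where "supporting H' K" "ultraparallel (chord u c) H'"
      "arcosh (sqrt (1 + \<sigma>)) \<le> hsetdist (chord u c) H'"
    using far_ultraparallel_supporting[OF assms(2-5) p assms(7-10)[unfolded n_def]] by blast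
  then show ?thesis
    unfolding hwidth_def by (intro cSUP_upper2[OF bdd_above_widths[OF assms(2,3) sup]]) auto
qed

lemma convex_body_not_on_line:
  assumes "convex_body K" "u \<noteq> 0"
  obtains z where "z \<in> K" "inner u z \<noteq> c"
proof -
  obtain x0 where "x0 \<in> interior K" using assms(1) by (auto simp: convex_body_def)
  then obtain e where e: "e > 0" "ball x0 e \<subseteq> K" by (meson mem_interior)
  define x1 where "x1 = x0 + (e / (2 * cmod u)) *\<^sub>R u"
  have "dist x0 x1 = e / 2" using assms(2) e by (simp add: x1_def dist_norm)
  then have K: "x0 \<in> K" "x1 \<in> K" using e by auto
  have "inner u x1 = inner u x0 + (e / (2 * cmod u)) * (cmod u)\<^sup>2"
    by (simp add: x1_def inner_add_right power2_norm_eq_inner)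
  moreover have "(e / (2 * cmod u)) * (cmod u)\<^sup>2 > 0" using e assms(2) by simp
  ultimately have "inner u x1 \<noteq> inner u x0" by linarith
  then show ?thesis using that K by metis
qed

lemma convex_body_far_point:
  fixes u :: complex and c :: real
  defines "n \<equiv> line_normal u c"
  assumes "convex_body K" "u \<noteq> 0" "p \<in> H2" "inner u p = c"
  obtains \<sigma> z where "\<sigma> > 0" "z \<in> K" "\<sigma> * mink n n \<le> (mink (lift z) n)\<^sup>2"
proof -
  obtain z where z: "z \<in> K" "inner u z \<noteq> c" using convex_body_not_on_line[OF assms(2,3)] by blast
  have zH: "z \<in> H2" using z(1) assms(2) by (auto simp: convex_body_def)
  have \<nu>: "mink n n > 0" unfolding n_def by (rule mink_line_normal_pos[OF assms(3-5)])
  have "(mink (lift z) n)\<^sup>2 > 0"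
    using z(2) lift_den_pos[OF zH] by (simp add: n_def mink_lift_line_normal zH)
  then show ?thesis using that[of "(mink (lift z) n)\<^sup>2 / mink n n" z] \<nu> z(1) by simp
qed

lemma hwidth_nonneg:
  assumes "convex_body K" "supporting H K"
  shows "0 \<le> hwidth H K"
proof -
  obtain u c where uc: "u \<noteq> 0" "H = chord u c" "\<forall>x\<in>K. inner u x \<le> c" "chord u c \<inter> K \<noteq> {}"
    using supporting_chordE[OF assms(2)] by blast
  obtain p where p: "p \<in> K" "p \<in> H2" "inner u p = c" using uc(4) by (auto simp: chord_def)
  obtain \<sigma> z where "\<sigma> > 0" "z \<in> K"
      "\<sigma> * mink (line_normal u c) (line_normal u c) \<le> (mink (lift z) (line_normal u c))\<^sup>2"
    using convex_body_far_point[OF assms(1) uc(1) p(2,3)] by blast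
  then have "arcosh (sqrt (1 + \<sigma>)) \<le> hwidth H K"
    unfolding uc(2) using assms(1) uc(1,3) p(1,3) by (intro hwidth_ge_arcosh) (auto simp: convex_body_def)
  moreover have "arcosh (sqrt (1 + \<sigma>)) \<ge> 0" using \<open>\<sigma> > 0\<close> by simp
  ultimately show ?thesis by linarith
qed

lemma hwidth_le_arcosh:
  fixes u :: complex and c :: real
  defines "n \<equiv> line_normal u c"
  assumes K: "convex_body K" and uc: "u \<noteq> 0" "\<forall>x\<in>K. inner u x \<le> c" "p \<in> K" "inner u p = c"
    and \<sigma>: "\<sigma> \<ge> 0" and near: "\<forall>x\<in>K. (mink (lift x) n)\<^sup>2 \<le> \<sigma> * mink n n"
  shows "hwidth (chord u c) K \<le> arcosh (sqrt (1 + \<sigma>))"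
  unfolding hwidth_def
proof (rule cSUP_least)
  have KH: "compact K" "K \<subseteq> H2" using K by (auto simp: convex_body_def)
  have p: "p \<in> H2" using uc(3) KH by auto
  obtain \<sigma>' z where "\<sigma>' > 0" "z \<in> K" "\<sigma>' * mink n n \<le> (mink (lift z) n)\<^sup>2"
    using convex_body_far_point[OF K uc(1) p uc(4)] unfolding n_def by blast
  then show "{H'. supporting H' K \<and> ultraparallel (chord u c) H'} \<noteq> {}"
    using far_ultraparallel_supporting[OF KH uc(1,2) p uc(4)] unfolding n_def by blast
  fix H' assume "H' \<in> {H'. supporting H' K \<and> ultraparallel (chord u c) H'}"
  then have H': "supporting H' K" by simp
  then obtain q where "q \<in> H'" "q \<in> K" by (auto simp: supporting_def)
  then show "hsetdist (chord u c) H' \<le> arcosh (sqrt (1 + \<sigma>))"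
    using hsetdist_chord_le[OF uc(1) p uc(4) supporting_subset_H2[OF H'] _ \<sigma>] near
    unfolding n_def by blast
qed

lemma exists_supporting:
  assumes "convex_body K"
  obtains H where "supporting H K"
proof -
  have K: "compact K" "K \<subseteq> H2" "K \<noteq> {}" using assms by (auto simp: convex_body_def)
  have "continuous_on K Re" by (intro continuous_intros)
  then obtain z where z: "z \<in> K" "\<forall>x\<in>K. Re x \<le> Re z"
    using continuous_attains_sup[OF K(1,3)] by blast
  have "inner 1 x = Re x" for x :: complex by (simp add: inner_complex_def)
  then have "supporting (chord 1 (Re z)) K"
    using z K(2) by (intro supporting_chordI) auto
  then show ?thesis using that by blast
qed

lemma thickness_ge_arcosh:
  assumes K: "convex_body K" and \<sigma>: "\<sigma> > 0"
    and far: "\<And>u c p. u \<noteq> 0 \<Longrightarrow> \<forall>x\<in>K. inner u x \<le> c \<Longrightarrow> p \<in> K \<Longrightarrow> inner u p = c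
      \<Longrightarrow> \<exists>z\<in>K. \<sigma> * mink (line_normal u c) (line_normal u c) \<le> (mink (lift z) (line_normal u c))\<^sup>2"
  shows "arcosh (sqrt (1 + \<sigma>)) \<le> thickness K"
  unfolding thickness_def
proof (rule cINF_greatest)
  show "{H. supporting H K} \<noteq> {}" using exists_supporting[OF K] by blast
  fix H assume "H \<in> {H. supporting H K}"
  then obtain u c where uc: "u \<noteq> 0" "H = chord u c" "\<forall>x\<in>K. inner u x \<le> c" "chord u c \<inter> K \<noteq> {}"
    using supporting_chordE by blast
  obtain p where p: "p \<in> K" "inner u p = c" using uc(4) by (auto simp: chord_def)
  obtain z where "z \<in> K" "\<sigma> * mink (line_normal u c) (line_normal u c) \<le> (mink (lift z) (line_normal u c))\<^sup>2"
    using far[OF uc(1,3) p] by blast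
  then show "arcosh (sqrt (1 + \<sigma>)) \<le> hwidth H K"
    unfolding uc(2) using K uc(1,3) p \<sigma> by (intro hwidth_ge_arcosh) (auto simp: convex_body_def)
qed

lemma thickness_le_arcosh:
  fixes u :: complex and c :: real
  defines "n \<equiv> line_normal u c"
  assumes K: "convex_body K" and uc: "u \<noteq> 0" "\<forall>x\<in>K. inner u x \<le> c" "p \<in> K" "inner u p = c"
    and \<sigma>: "\<sigma> \<ge> 0" and near: "\<forall>x\<in>K. (mink (lift x) n)\<^sup>2 \<le> \<sigma> * mink n n"
  shows "thickness K \<le> arcosh (sqrt (1 + \<sigma>))"
proof -
  have "bdd_below ((\<lambda>H. hwidth H K) ` {H. supporting H K})"
    using hwidth_nonneg[OF K] by (intro bdd_belowI2[where m = 0]) simp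
  moreover have "supporting (chord u c) K"
    using uc K by (intro supporting_chordI) (auto simp: convex_body_def)
  ultimately have "thickness K \<le> hwidth (chord u c) K"
    unfolding thickness_def by (intro cINF_lower) auto
  also have "\<dots> \<le> arcosh (sqrt (1 + \<sigma>))"
    using hwidth_le_arcosh[OF K uc \<sigma>] near unfolding n_def by blast
  finally show ?thesis .
qed

section \<open>Triangles\<close>

lemma convex_hull_subset_H2: "S \<subseteq> H2 \<Longrightarrow> convex hull S \<subseteq> H2"
  by (rule hull_minimal) (auto simp: H2_def)

lemma htriangle_distinct: "htriangle a b c \<Longrightarrow> a \<noteq> b \<and> b \<noteq> c \<and> a \<noteq> c"
  by (auto simp: htriangle_def collinear_2 insert_absorb2 insert_commute)

lemma convex_body_triangle:
  assumes "htriangle a b c"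
  shows "convex_body (convex hull {a, b, c})"
proof -
  have "a \<noteq> b" "a \<noteq> c" "b \<noteq> c" "\<not> collinear {a, b, c}"
    using assms htriangle_distinct by (auto simp: htriangle_def)
  then have "interior (convex hull {a, b, c}) \<noteq> {}"
    using interior_convex_hull_eq_empty[of "{a, b, c}"] collinear_3_eq_affine_dependent by auto
  then show ?thesis
    using assms unfolding convex_body_def htriangle_def
    by (auto intro!: convex_hull_subset_H2 finite_imp_compact_convex_hull)
qed

lemma mink_lift_convex_hull_nonpos:
  assumes "S \<subseteq> H2" "\<forall>v\<in>S. mink (lift v) N \<le> 0" "x \<in> convex hull S"
  shows "mink (lift x) N \<le> 0"
proof -
  have "convex hull S \<subseteq> {x. inner (Complex (mv1 N) (mv2 N)) x \<le> mv0 N}"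
    using assms(1,2) mink_lift_nonpos_iff by (intro hull_minimal) (auto intro: convex_halfspace_le)
  then show ?thesis
    using assms(1,3) convex_hull_subset_H2 mink_lift_nonpos_iff by blast
qed

lemma convex_hypercycle_region:
  assumes "M \<ge> 0"
  shows "convex {x. (inner u x - c)\<^sup>2 + M * ((Re x)\<^sup>2 + (Im x)\<^sup>2) \<le> M}"
  unfolding convex_def
proof (intro ballI allI impI)
  define f where "f z = (inner u z - c)\<^sup>2 + M * ((Re z)\<^sup>2 + (Im z)\<^sup>2)" for z
  fix x y :: complex and s t :: real
  assume "x \<in> {x. (inner u x - c)\<^sup>2 + M * ((Re x)\<^sup>2 + (Im x)\<^sup>2) \<le> M}"
    and "y \<in> {x. (inner u x - c)\<^sup>2 + M * ((Re x)\<^sup>2 + (Im x)\<^sup>2) \<le> M}"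
    and st: "0 \<le> s" "0 \<le> t" "s + t = 1"
  then have xy: "f x \<le> M" "f y \<le> M" by (simp_all add: f_def)
  have t: "t = 1 - s" using st(3) by simp
  have "f (s *\<^sub>R x + t *\<^sub>R y)
      = s * f x + t * f y - s * t * ((inner u (x - y))\<^sup>2 + M * ((Re (x - y))\<^sup>2 + (Im (x - y))\<^sup>2))"
    unfolding t f_def by (simp add: inner_complex_def power2_eq_square algebra_simps)
  also have "\<dots> \<le> s * f x + t * f y" using st assms by simp
  also have "\<dots> \<le> s * M + t * M" using xy st by (intro add_mono mult_left_mono)
  finally show "s *\<^sub>R x + t *\<^sub>R y \<in> {x. (inner u x - c)\<^sup>2 + M * ((Re x)\<^sup>2 + (Im x)\<^sup>2) \<le> M}"
    using st(3) by (simp add: f_def distrib_right[symmetric])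
qed

lemma convex_hull_near_line:
  fixes u :: complex and c :: real
  defines "n \<equiv> line_normal u c"
  assumes S: "S \<subseteq> H2" and k: "k \<ge> 0" and near: "\<forall>v\<in>S. (mink (lift v) n)\<^sup>2 \<le> k"
  shows "\<forall>x\<in>convex hull S. (mink (lift x) n)\<^sup>2 \<le> k"
proof -
  note compare = mink_lift_line_normal_sq_compare(1)[where u = u and c = c and k = k, folded n_def]
  have "S \<subseteq> {x. (inner u x - c)\<^sup>2 + k * ((Re x)\<^sup>2 + (Im x)\<^sup>2) \<le> k}"
    using S near compare by blast
  then have "convex hull S \<subseteq> {x. (inner u x - c)\<^sup>2 + k * ((Re x)\<^sup>2 + (Im x)\<^sup>2) \<le> k}"
    by (intro hull_minimal convex_hypercycle_region k)
  then show ?thesis using convex_hull_subset_H2[OF S] compare by blast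
qed

lemma triangle_side_line:
  assumes "htriangle a b c"
  obtains u c0 where "u \<noteq> 0" "line_normal u c0 = side_normal (lift a) (lift b) (lift c)"
    "inner u a = c0" "inner u b = c0" "\<forall>x\<in>convex hull {a, b, c}. inner u x \<le> c0"
proof -
  define n where "n = side_normal (lift a) (lift b) (lift c)"
  define u c0 where "u = Complex (mv1 n) (mv2 n)" "c0 = mv0 n"
  have H: "a \<in> H2" "b \<in> H2" "c \<in> H2" using assms by (auto simp: htriangle_def)
  have d: "mdet (lift a) (lift b) (lift c) \<noteq> 0"
    using assms mdet_lift_eq_0_iff[OF H] by (simp add: htriangle_def)
  have abc: "inner u a = c0" "inner u b = c0" "inner u c \<le> c0"
    using mink_lift_eq_0_iff[OF H(1), of n] mink_lift_eq_0_iff[OF H(2), of n]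
      mink_lift_nonpos_iff[OF H(3), of n]
    by (simp_all add: n_def u_c0_def)
  have "u \<noteq> 0"
  proof
    assume "u = 0"
    then have "mink (lift c) n = - mv0 (lift c) * c0" "mink (lift a) n = - mv0 (lift a) * c0"
      by (simp_all add: mink_def u_c0_def complex_eq_iff)
    then show False using d mv0_lift_pos[OF H(1)] by (simp add: n_def)
  qed
  moreover have "line_normal u c0 = side_normal (lift a) (lift b) (lift c)"
    by (simp add: u_c0_def line_normal_components n_def)
  moreover have "convex hull {a, b, c} \<subseteq> {x. inner u x \<le> c0}"
    using abc by (intro hull_minimal) (auto intro: convex_halfspace_le)
  ultimately show ?thesis using that abc(1,2) by blast
qed

text \<open>The width with respect to the side \<open>ab\<close> is at most the height from \<open>c\<close>; the fraction
  under the square root is \<open>sinh\<^sup>2\<close> of that height.\<close>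
lemma thickness_triangle_le:
  assumes "htriangle a b c"
  shows "thickness (convex hull {a, b, c})
    \<le> arcosh (sqrt (1 + (mdet (lift a) (lift b) (lift c))\<^sup>2 / ((mink (lift a) (lift b))\<^sup>2 - 1)))"
proof -
  define A B C where "A = lift a" "B = lift b" "C = lift c"
  define d \<sigma> where "d = mdet A B C" "\<sigma> = (mdet A B C)\<^sup>2 / ((mink A B)\<^sup>2 - 1)"
  have H: "a \<in> H2" "b \<in> H2" "c \<in> H2" and "a \<noteq> b"
    using assms htriangle_distinct by (auto simp: htriangle_def)
  have "d \<noteq> 0" using assms mdet_lift_eq_0_iff[OF H] by (simp add: d_\<sigma>_def A_B_C_def htriangle_def)
  obtain u c0 where uc: "u \<noteq> 0" "line_normal u c0 = side_normal A B C" "inner u a = c0" "inner u b = c0"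
      "\<forall>x\<in>convex hull {a, b, c}. inner u x \<le> c0"
    using triangle_side_line[OF assms] unfolding A_B_C_def by blast
  have "1 < - mink A B" using mink_lift_le(2)[OF H(1,2) \<open>a \<noteq> b\<close>] by (simp add: A_B_C_def)
  then have AB: "(mink A B)\<^sup>2 > 1" using one_less_power[of "- mink A B" 2] by simp
  have "mink (side_normal A B C) (side_normal A B C) = d\<^sup>2 * ((mink A B)\<^sup>2 - 1)"
    using H by (simp add: d_\<sigma>_def mink_side_normal_self A_B_C_def mink_lift_self)
  then have \<sigma>n: "\<sigma> * mink (side_normal A B C) (side_normal A B C) = d\<^sup>2 * d\<^sup>2"
    using AB by (simp add: d_\<sigma>_def)
  have "\<forall>v\<in>{a, b, c}. (mink (lift v) (side_normal A B C))\<^sup>2 \<le> d\<^sup>2 * d\<^sup>2"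
    by (simp add: A_B_C_def d_\<sigma>_def power2_eq_square flip: A_B_C_def)
  then have "\<forall>x\<in>convex hull {a, b, c}. (mink (lift x) (side_normal A B C))\<^sup>2 \<le> d\<^sup>2 * d\<^sup>2"
    using convex_hull_near_line[of "{a, b, c}" "d\<^sup>2 * d\<^sup>2" u c0] H uc(2) by simp
  moreover have "\<sigma> \<ge> 0" using AB by (simp add: d_\<sigma>_def)
  moreover have "a \<in> convex hull {a, b, c}" by (simp add: hull_inc)
  ultimately show ?thesis
    using thickness_le_arcosh[OF convex_body_triangle[OF assms] uc(1,5) _ uc(3)] \<sigma>n
    unfolding uc(2) by (simp add: d_\<sigma>_def A_B_C_def)
qed

section \<open>Cutting off a vertex\<close>

lemma mink_comb_timelike:
  assumes "mink A A = -1" "mink B B = -1" "mink A B < 0" "\<epsilon> \<ge> 0"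
  shows "mink (A + \<epsilon> *\<^sub>R B) (A + \<epsilon> *\<^sub>R B) < 0"
proof -
  have "mink (A + \<epsilon> *\<^sub>R B) (A + \<epsilon> *\<^sub>R B) = -1 + 2 * \<epsilon> * mink A B - \<epsilon>\<^sup>2"
    using assms(1,2) by (simp add: mink_commute[of B A] power2_eq_square algebra_simps)
  also have "\<dots> < 0" using assms(3,4) by (smt (verit) mult_nonneg_nonpos zero_le_power2)
  finally show ?thesis .
qed

lemma cut_side_normals:
  "side_normal (A + \<epsilon> *\<^sub>R B) B (A + \<epsilon> *\<^sub>R C) = \<epsilon> *\<^sub>R side_normal A B C"
  "side_normal (A + \<epsilon> *\<^sub>R B) (A + \<epsilon> *\<^sub>R C) B = \<epsilon>\<^sup>2 *\<^sub>R side_normal (A + \<epsilon> *\<^sub>R B) (C - B) C"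
  "side_normal B A (C - A) = side_normal A B C"
  "side_normal B (C - A) A = side_normal B (A - C) C"
  "side_normal B (A - C) (A + \<epsilon> *\<^sub>R C) = (1 + \<epsilon>) *\<^sub>R side_normal B (A - C) C"
  "side_normal B C (A - C) = side_normal B C (A + \<epsilon> *\<^sub>R C)"
  by (simp_all add: side_normal_def mdet_def mcross_def mvec.expand power2_eq_square algebra_simps)

text \<open>Cutting the vertex \<open>A\<close> of the triangle \<open>ABC\<close> along the segment from \<open>A + \<epsilon> B\<close> to
  \<open>A + \<epsilon> C\<close>: these distance conditions make \<open>C\<close> or \<open>A + \<epsilon> C\<close> far from every supporting
  line through the vertices \<open>A + \<epsilon> B\<close> and \<open>B\<close> of the cut triangle.\<close>
definition cut_admissible :: "real \<Rightarrow> mvec \<Rightarrow> mvec \<Rightarrow> mvec \<Rightarrow> real \<Rightarrow> bool" where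
  "cut_admissible \<sigma> A B C \<epsilon> \<longleftrightarrow>
     far_from_line \<sigma> A B C \<and> far_from_line \<sigma> B (A - C) C \<and>
     far_from_line \<sigma> (A + \<epsilon> *\<^sub>R B) (C - B) C \<and> far_from_line \<sigma> B (A - C) (A + \<epsilon> *\<^sub>R C) \<and>
     far_from_line \<sigma> B C (A + \<epsilon> *\<^sub>R C)"

lemma cut_admissible_far_side:
  assumes d: "mdet A B C \<noteq> 0" and \<epsilon>: "\<epsilon> > 0" and cut: "cut_admissible \<sigma> A B C \<epsilon>"
  shows "far_side \<sigma> (side_normal A B C) C" "far_side \<sigma> (side_normal B (A - C) C) C"
    "far_side \<sigma> (side_normal (A + \<epsilon> *\<^sub>R B) (C - B) C) C"
    "far_side \<sigma> (side_normal B (A - C) (A + \<epsilon> *\<^sub>R C)) (A + \<epsilon> *\<^sub>R C)"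
    "far_side \<sigma> (side_normal B C (A + \<epsilon> *\<^sub>R C)) (A + \<epsilon> *\<^sub>R C)"
proof -
  have "mdet B (A - C) C = - mdet A B C" "mdet (A + \<epsilon> *\<^sub>R B) (C - B) C = - mdet A B C"
    "mdet B (A - C) (A + \<epsilon> *\<^sub>R C) = - (1 + \<epsilon>) * mdet A B C" "mdet B C (A + \<epsilon> *\<^sub>R C) = mdet A B C"
    by (simp_all add: mdet_def algebra_simps)
  then show "far_side \<sigma> (side_normal A B C) C" "far_side \<sigma> (side_normal B (A - C) C) C"
    "far_side \<sigma> (side_normal (A + \<epsilon> *\<^sub>R B) (C - B) C) C"
    "far_side \<sigma> (side_normal B (A - C) (A + \<epsilon> *\<^sub>R C)) (A + \<epsilon> *\<^sub>R C)"
    "far_side \<sigma> (side_normal B C (A + \<epsilon> *\<^sub>R C)) (A + \<epsilon> *\<^sub>R C)"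
    using cut d \<epsilon> by (simp_all add: far_side_side_normal_iff cut_admissible_def add_nonneg_eq_0_iff)
qed

lemma cut_far_vertex:
  fixes A B C N :: mvec and \<epsilon> :: real
  defines "A1 \<equiv> A + \<epsilon> *\<^sub>R B" and "A2 \<equiv> A + \<epsilon> *\<^sub>R C"
  assumes unit: "mink A A = -1" "mink B B = -1" "mink C C = -1" "mink A B < 0" "mink A C < 0"
    and d: "mdet A B C \<noteq> 0" and \<epsilon>: "\<epsilon> > 0" and \<sigma>: "\<sigma> \<ge> 0" and cut: "cut_admissible \<sigma> A B C \<epsilon>"
    and N: "mink A1 N \<le> 0" "mink B N \<le> 0" "mink C N \<le> 0" "mink A2 N \<le> 0"
    and touch: "mink A1 N = 0 \<or> mink B N = 0"
  shows "far_side \<sigma> N C \<or> far_side \<sigma> N A2"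
proof -
  note far = cut_admissible_far_side[OF d \<epsilon> cut, folded A1_def A2_def]
  have dets: "mdet A1 B A2 = \<epsilon> * mdet A B C" "mdet B A (C - A) = - mdet A B C"
      "mdet B (A - C) C = - mdet A B C"
    by (simp_all add: A1_def A2_def mdet_def algebra_simps)
  have C: "mink C C \<le> 0" using unit by simp
  have A2: "mink A2 A2 \<le> 0"
    using mink_comb_timelike[OF unit(1,3,5)] \<epsilon> unfolding A2_def by (simp add: less_imp_le)
  consider "mink A1 N = 0" | "mink B N = 0" using touch by blast
  then show ?thesis
  proof cases
    case 1
    have "far_side \<sigma> N C"
    proof (rule far_side_vertex[OF _ _ C \<sigma> 1 N(2,4)])
      show "mink A1 A1 < 0" using mink_comb_timelike[OF unit(1,2,4)] \<epsilon> by (simp add: A1_def)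
      show "mdet A1 B A2 \<noteq> 0" using d \<epsilon> by (simp add: dets)
      show "far_side \<sigma> (side_normal A1 B A2) C"
        using far(1) \<epsilon> by (simp add: A1_def A2_def cut_side_normals(1) far_side_scaleR)
      show "far_side \<sigma> (side_normal A1 A2 B) C"
        using far(3) \<epsilon> by (simp add: A1_def A2_def cut_side_normals(2) far_side_scaleR)
    qed
    then show ?thesis ..
  next
    case 2
    have AN: "mink A N \<le> 0" using N(1) 2 by (simp add: A1_def)
    show ?thesis
    proof (cases "mink C N \<le> mink A N")
      case True
      have "far_side \<sigma> N C"
        by (rule far_side_vertex[where Q = "C - A", OF _ _ C \<sigma> 2 AN])
          (use unit True far(1,2) d in \<open>simp_all add: dets cut_side_normals(3,4)\<close>)
      then show ?thesis ..
    next
      case False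
      have "far_side \<sigma> N A2"
      proof (rule far_side_vertex[OF _ _ A2 \<sigma> 2 _ N(3)])
        show "mink B B < 0" "mdet B (A - C) C \<noteq> 0" "mink (A - C) N \<le> 0"
          using unit False d by (simp_all add: dets)
        show "far_side \<sigma> (side_normal B (A - C) C) A2"
          using far(4) \<epsilon> by (simp add: A2_def cut_side_normals(5) far_side_scaleR add_pos_pos)
        show "far_side \<sigma> (side_normal B C (A - C)) A2"
          using far(5) by (simp add: A2_def cut_side_normals(6)[where \<epsilon> = \<epsilon>])
      qed
      then show ?thesis ..
    qed
  qed
qed

lemma eventually_far_from_line:
  assumes "\<sigma> * (- mink Z Z) * ((mink X Y)\<^sup>2 - mink X X * mink Y Y) < (mdet X Y Z)\<^sup>2"
  shows "\<forall>\<^sub>F \<epsilon> in at_right 0.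
    far_from_line \<sigma> (X + \<epsilon> *\<^sub>R X') (Y + \<epsilon> *\<^sub>R Y') (Z + \<epsilon> *\<^sub>R Z')"
proof -
  define F where "F \<epsilon> = (mdet (X + \<epsilon> *\<^sub>R X') (Y + \<epsilon> *\<^sub>R Y') (Z + \<epsilon> *\<^sub>R Z'))\<^sup>2
    - \<sigma> * (- mink (Z + \<epsilon> *\<^sub>R Z') (Z + \<epsilon> *\<^sub>R Z'))
      * ((mink (X + \<epsilon> *\<^sub>R X') (Y + \<epsilon> *\<^sub>R Y'))\<^sup>2
         - mink (X + \<epsilon> *\<^sub>R X') (X + \<epsilon> *\<^sub>R X') * mink (Y + \<epsilon> *\<^sub>R Y') (Y + \<epsilon> *\<^sub>R Y'))" for \<epsilon>
  have "continuous (at_right 0) F"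
    unfolding F_def mink_def mdet_def mvec_components by (intro continuous_intros)
  moreover have "F 0 > 0" using assms by (simp add: F_def)
  ultimately have "\<forall>\<^sub>F \<epsilon> in at_right 0. F \<epsilon> > 0"
    by (simp add: continuous_within order_tendstoD(1))
  then show ?thesis by eventually_elim (simp add: F_def far_from_line_def)
qed

lemma eventually_cut_admissible:
  assumes unit: "mink A A = -1" "mink B B = -1" "mink C C = -1"
    and "\<sigma> * ((mink A B)\<^sup>2 - 1) \<le> (mdet A B C)\<^sup>2"
    and "\<sigma> * ((mink A B - mink A C)\<^sup>2 - 2 * mink B C - 2) < (mdet A B C)\<^sup>2"
    and "\<sigma> * ((mink A B - mink B C)\<^sup>2 - 2 * mink A C - 2) < (mdet A B C)\<^sup>2"
    and "\<sigma> * ((mink B C)\<^sup>2 - 1) < (mdet A B C)\<^sup>2"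
  shows "\<forall>\<^sub>F \<epsilon> in at_right 0. cut_admissible \<sigma> A B C \<epsilon>"
proof -
  have dets: "mdet A (C - B) C = - mdet A B C" "mdet B (A - C) C = - mdet A B C"
    "mdet B (A - C) A = - mdet A B C" "mdet B C A = mdet A B C" "mdet B A C = - mdet A B C"
    by (simp_all add: mdet_def algebra_simps)
  have gaps: "(mink A (C - B))\<^sup>2 - mink A A * mink (C - B) (C - B) = (mink A B - mink A C)\<^sup>2 - 2 * mink B C - 2"
    "(mink B (A - C))\<^sup>2 - mink B B * mink (A - C) (A - C) = (mink A B - mink B C)\<^sup>2 - 2 * mink A C - 2"
    using unit by (simp_all add: mink_commute[of B A] mink_commute[of C A] mink_commute[of C B]
        power2_eq_square algebra_simps)
  have "far_from_line \<sigma> A B C" "far_from_line \<sigma> B (A - C) C"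
    using assms(4,6) unit unfolding far_from_line_def dets gaps by simp_all
  moreover have "\<forall>\<^sub>F \<epsilon> in at_right 0. far_from_line \<sigma> (A + \<epsilon> *\<^sub>R B) (C - B + \<epsilon> *\<^sub>R 0) (C + \<epsilon> *\<^sub>R 0)"
    by (intro eventually_far_from_line, unfold dets gaps) (use assms(5) unit in simp)
  moreover have "\<forall>\<^sub>F \<epsilon> in at_right 0. far_from_line \<sigma> (B + \<epsilon> *\<^sub>R 0) (A - C + \<epsilon> *\<^sub>R 0) (A + \<epsilon> *\<^sub>R C)"
    by (intro eventually_far_from_line, unfold dets gaps) (use assms(6) unit in simp)
  moreover have "\<forall>\<^sub>F \<epsilon> in at_right 0. far_from_line \<sigma> (B + \<epsilon> *\<^sub>R 0) (C + \<epsilon> *\<^sub>R 0) (A + \<epsilon> *\<^sub>R C)"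
    by (intro eventually_far_from_line, unfold dets) (use assms(7) unit in simp)
  ultimately show ?thesis
    unfolding cut_admissible_def by (simp add: eventually_conj_iff)
qed

lemma longest_side_gap:
  fixes x z w :: real
  assumes "x > 1" "z > 1" "w > 1"
  shows "(x - w)\<^sup>2 + 2 * (z - 1) < (max x (max z w))\<^sup>2 - 1"
proof -
  consider "max x (max z w) = x" "z \<le> x" "w \<le> x" | "max x (max z w) = z" "x \<le> z" "w \<le> z"
    | "max x (max z w) = w" "x \<le> w" "z \<le> w" by linarith
  then show ?thesis
  proof cases
    case 1
    have "(x - w)\<^sup>2 + 2 * (z - 1) - (x\<^sup>2 - 1) \<le> (w - 1) * (w + 1 - 2 * x)"
      using 1 by (simp add: power2_eq_square algebra_simps)
    also have "\<dots> < 0" using 1 assms by (intro mult_pos_neg) auto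
    finally show ?thesis using 1 by simp
  next
    case 2
    then have "\<bar>x - w\<bar> < z - 1" using assms by auto
    then have "(x - w)\<^sup>2 < (z - 1)\<^sup>2" by (metis abs_le_square_iff abs_of_pos assms(2) diff_gt_0_iff_gt not_le)
    then show ?thesis using 2 by (simp add: power2_eq_square algebra_simps)
  next
    case 3
    have "(x - w)\<^sup>2 + 2 * (z - 1) - (w\<^sup>2 - 1) \<le> (x - 1) * (x + 1 - 2 * w)"
      using 3 by (simp add: power2_eq_square algebra_simps)
    also have "\<dots> < 0" using 3 assms by (intro mult_pos_neg) auto
    finally show ?thesis using 3 by simp
  qed
qed

lemma longest_side_bounds:
  fixes x z w D :: real
  defines "M \<equiv> max x (max z w)"
  defines "\<sigma> \<equiv> D / (M\<^sup>2 - 1)"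
  assumes xzw: "x > 1" "z > 1" "w > 1" and shorter: "z < M" and D: "D > 0"
  shows "\<sigma> * (x\<^sup>2 - 1) \<le> D" "\<sigma> * (w\<^sup>2 - 1) \<le> D" "\<sigma> * (z\<^sup>2 - 1) < D"
    "\<sigma> * ((x - w)\<^sup>2 + 2 * (z - 1)) < D" "\<sigma> * ((z - x)\<^sup>2 + 2 * (w - 1)) < D"
    "\<sigma> * ((z - w)\<^sup>2 + 2 * (x - 1)) < D"
proof -
  have m: "M\<^sup>2 - 1 > 0" using xzw by (smt (verit) M_def one_less_power zero_less_numeral)
  have le: "\<sigma> * g \<le> D" if "g \<le> M\<^sup>2 - 1" for g
    using mult_left_mono[OF that, of D] m D by (simp add: \<sigma>_def field_simps right_diff_distrib)
  have less: "\<sigma> * g < D" if "g < M\<^sup>2 - 1" for g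
    using mult_strict_left_mono[OF that D] m by (simp add: \<sigma>_def field_simps right_diff_distrib)
  have "x\<^sup>2 \<le> M\<^sup>2" "w\<^sup>2 \<le> M\<^sup>2" using xzw by (simp_all add: M_def power_mono)
  then show "\<sigma> * (x\<^sup>2 - 1) \<le> D" "\<sigma> * (w\<^sup>2 - 1) \<le> D" by (simp_all add: le)
  have "z\<^sup>2 < M\<^sup>2" using shorter xzw by (intro power_strict_mono) auto
  then show "\<sigma> * (z\<^sup>2 - 1) < D" by (simp add: less)
  have M: "max z (max w x) = M" "max z (max x w) = M" by (auto simp: M_def max_def)
  show "\<sigma> * ((x - w)\<^sup>2 + 2 * (z - 1)) < D"
    using longest_side_gap[OF xzw, folded M_def] by (rule less)
  show "\<sigma> * ((z - x)\<^sup>2 + 2 * (w - 1)) < D"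
    using longest_side_gap[of z w x, unfolded M(1)] xzw by (intro less) blast
  show "\<sigma> * ((z - w)\<^sup>2 + 2 * (x - 1)) < D"
    using longest_side_gap[of z x w, unfolded M(2)] xzw by (intro less) blast
qed

lemma exists_cut:
  fixes A B C :: mvec
  defines "M \<equiv> max (- mink A B) (max (- mink B C) (- mink A C))"
  assumes unit: "mink A A = -1" "mink B B = -1" "mink C C = -1"
    and sides: "mink A B < -1" "mink B C < -1" "mink A C < -1" and "mdet A B C \<noteq> 0"
    and shorter: "- mink B C < M"
  shows "\<exists>\<epsilon>>0. cut_admissible ((mdet A B C)\<^sup>2 / (M\<^sup>2 - 1)) A B C \<epsilon>
    \<and> cut_admissible ((mdet A B C)\<^sup>2 / (M\<^sup>2 - 1)) A C B \<epsilon>"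
proof -
  define x z w where "x = - mink A B" "z = - mink B C" "w = - mink A C"
  define \<sigma> where "\<sigma> = (mdet A B C)\<^sup>2 / (M\<^sup>2 - 1)"
  have M: "M = max x (max z w)" by (simp add: M_def x_z_w_def)
  have "x > 1" "z > 1" "w > 1" "z < max x (max z w)" "(mdet A B C)\<^sup>2 > 0"
    using sides shorter assms(8) by (auto simp: x_z_w_def M)
  note bounds = longest_side_bounds[OF this, folded M, folded \<sigma>_def]
  have gaps: "(mink A B - mink A C)\<^sup>2 - 2 * mink B C - 2 = (x - w)\<^sup>2 + 2 * (z - 1)"
    "(mink A B - mink B C)\<^sup>2 - 2 * mink A C - 2 = (z - x)\<^sup>2 + 2 * (w - 1)"
    "(mink A C - mink A B)\<^sup>2 - 2 * mink C B - 2 = (x - w)\<^sup>2 + 2 * (z - 1)"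
    "(mink A C - mink C B)\<^sup>2 - 2 * mink A B - 2 = (z - w)\<^sup>2 + 2 * (x - 1)"
    "(mink A B)\<^sup>2 - 1 = x\<^sup>2 - 1" "(mink A C)\<^sup>2 - 1 = w\<^sup>2 - 1"
    "(mink B C)\<^sup>2 - 1 = z\<^sup>2 - 1" "(mink C B)\<^sup>2 - 1 = z\<^sup>2 - 1"
    by (simp_all add: x_z_w_def mink_commute[of C B] power2_eq_square algebra_simps)
  have D: "(mdet A C B)\<^sup>2 = (mdet A B C)\<^sup>2" by (simp add: mdet_perm(2)[of A B C])
  have "\<forall>\<^sub>F \<epsilon> in at_right 0. cut_admissible \<sigma> A B C \<epsilon>"
    by (rule eventually_cut_admissible[OF unit], unfold gaps) (use bounds in auto)
  moreover have "\<forall>\<^sub>F \<epsilon> in at_right 0. cut_admissible \<sigma> A C B \<epsilon>"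
    by (rule eventually_cut_admissible[OF unit(1,3,2)], unfold gaps D) (use bounds in auto)
  ultimately have "\<forall>\<^sub>F \<epsilon> in at_right 0. \<epsilon> > 0 \<and> cut_admissible \<sigma> A B C \<epsilon> \<and> cut_admissible \<sigma> A C B \<epsilon>"
    using eventually_at_right_less[of 0] by eventually_elim auto
  then show ?thesis using eventually_happens'[OF trivial_limit_at_right_real] unfolding \<sigma>_def by blast
qed

lemma proj_lift_comb:
  assumes a: "a \<in> H2" and b: "b \<in> H2" and \<epsilon>: "\<epsilon> \<ge> 0"
  defines "V \<equiv> lift a + \<epsilon> *\<^sub>R lift b"
  shows "proj V \<in> H2" and "\<exists>k>0. lift (proj V) = k *\<^sub>R V" and "proj V \<in> closed_segment a b"
proof -
  have "mink V V < 0" unfolding V_def using a b \<epsilon> mink_lift_le(1)[OF a b]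
    by (intro mink_comb_timelike) (simp_all add: mink_lift_self)
  moreover have "mv0 V > 0" using mv0_lift_pos[OF a] mv0_lift_pos[OF b] \<epsilon> by (simp add: V_def add_pos_nonneg)
  ultimately show "proj V \<in> H2" "\<exists>k>0. lift (proj V) = k *\<^sub>R V"
    using proj_in_H2 lift_proj by (auto intro!: exI[of _ "1 / sqrt (- mink V V)"])
  have ra: "lift_den a > 0" and rb: "lift_den b > 0" using lift_den_pos a b by auto
  define s where "s = 1 / lift_den a + \<epsilon> / lift_den b"
  have s: "s > 0" using ra rb \<epsilon> by (simp add: s_def add_pos_nonneg)
  define t where "t = (\<epsilon> / lift_den b) / s"
  have "\<epsilon> / lift_den b \<le> s" using ra by (simp add: s_def)
  then have t: "0 \<le> t" "t \<le> 1" unfolding t_def using s rb \<epsilon> by (simp_all only: divide_le_eq_1_pos) simp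
  have "1 - t = (s - \<epsilon> / lift_den b) / s" using s by (simp add: t_def diff_divide_distrib)
  then have "1 - t = (1 / lift_den a) / s" by (simp add: s_def)
  have V: "mv0 V = s" "mv1 V = Re a / lift_den a + \<epsilon> * (Re b / lift_den b)"
    "mv2 V = Im a / lift_den a + \<epsilon> * (Im b / lift_den b)"
    by (simp_all add: V_def lift_def s_def)
  have "Re (proj V) = (1 - t) * Re a + t * Re b" "Im (proj V) = (1 - t) * Im a + t * Im b"
    unfolding \<open>1 - t = (1 / lift_den a) / s\<close> using s ra rb
    by (simp_all add: proj_def V t_def field_simps)
  then have "proj V = (1 - t) *\<^sub>R a + t *\<^sub>R b" by (simp add: complex_eq_iff)
  then show "proj V \<in> closed_segment a b" using t by (auto simp: closed_segment_def)
qed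

lemma thickness_triangle_le_longest_side:
  fixes a b c :: complex
  defines "M \<equiv> max (- mink (lift a) (lift b)) (max (- mink (lift b) (lift c)) (- mink (lift a) (lift c)))"
  assumes "htriangle a b c"
  shows "thickness (convex hull {a, b, c})
    \<le> arcosh (sqrt (1 + (mdet (lift a) (lift b) (lift c))\<^sup>2 / (M\<^sup>2 - 1)))"
proof -
  have "htriangle b c a" "htriangle c a b" using assms(2) by (auto simp: htriangle_def insert_commute)
  moreover have "{b, c, a} = {a, b, c}" "{c, a, b} = {a, b, c}" by auto
  moreover have "mdet (lift b) (lift c) (lift a) = mdet (lift a) (lift b) (lift c)"
    "mdet (lift c) (lift a) (lift b) = mdet (lift a) (lift b) (lift c)"
    by (simp_all add: mdet_perm(4,5))
  moreover have "M = - mink (lift a) (lift b) \<or> M = - mink (lift b) (lift c) \<or> M = - mink (lift c) (lift a)"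
    by (auto simp: M_def max_def mink_commute)
  ultimately show ?thesis
    using thickness_triangle_le[OF assms(2)] thickness_triangle_le[of b c a] thickness_triangle_le[of c a b]
    by auto
qed

lemma far_side_lift_le:
  assumes "z \<in> H2" "far_side \<sigma> N (lift z)"
  shows "\<sigma> * mink N N \<le> (mink (lift z) N)\<^sup>2"
  using assms by (simp add: far_side_def mink_lift_self)

lemma cut_separating_normal:
  "mink C (side_normal (A + \<epsilon> *\<^sub>R B) (A + \<epsilon> *\<^sub>R C) B) = - \<epsilon>\<^sup>2 * (mdet A B C)\<^sup>2"
  "mink A (side_normal (A + \<epsilon> *\<^sub>R B) (A + \<epsilon> *\<^sub>R C) B) = \<epsilon> ^ 3 * (mdet A B C)\<^sup>2"
  by (simp_all add: side_normal_def mdet_def mcross_def mink_def power2_eq_square power3_eq_cube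
      algebra_simps)

lemma cut_triangle:
  fixes a b c :: complex and \<epsilon> :: real
  defines "A \<equiv> lift a" and "B \<equiv> lift b" and "C \<equiv> lift c"
  defines "a1 \<equiv> proj (A + \<epsilon> *\<^sub>R B)" and "a2 \<equiv> proj (A + \<epsilon> *\<^sub>R C)"
  assumes tri: "htriangle a b c" and \<epsilon>: "\<epsilon> > 0"
  shows "convex_body (convex hull {a1, a2, b, c})"
    and "convex hull {a1, a2, b, c} \<subset> convex hull {a, b, c}"
proof -
  have H: "a \<in> H2" "b \<in> H2" "c \<in> H2" using tri by (auto simp: htriangle_def)
  have d: "mdet A B C \<noteq> 0"
    using tri mdet_lift_eq_0_iff[OF H] by (simp add: A_def B_def C_def htriangle_def)
  obtain k1 where k1: "k1 > 0" "lift a1 = k1 *\<^sub>R (A + \<epsilon> *\<^sub>R B)"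
    using proj_lift_comb(2)[OF H(1,2), of \<epsilon>] \<epsilon> by (auto simp: a1_def A_def B_def)
  obtain k2 where k2: "k2 > 0" "lift a2 = k2 *\<^sub>R (A + \<epsilon> *\<^sub>R C)"
    using proj_lift_comb(2)[OF H(1,3), of \<epsilon>] \<epsilon> by (auto simp: a2_def A_def C_def)
  have a12: "a1 \<in> H2" "a2 \<in> H2"
    using proj_lift_comb(1)[OF H(1,2), of \<epsilon>] proj_lift_comb(1)[OF H(1,3), of \<epsilon>] \<epsilon>
    by (auto simp: a1_def a2_def A_def B_def C_def)
  define R Z where "R = convex hull {a, b, c}" and "Z = convex hull {a1, a2, b, c}"
  have "a1 \<in> R" "a2 \<in> R"
    using proj_lift_comb(3)[OF H(1,2), of \<epsilon>] proj_lift_comb(3)[OF H(1,3), of \<epsilon>] \<epsilon>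
      closed_segment_subset[of a R b] closed_segment_subset[of a R c]
    by (auto simp: a1_def a2_def A_def B_def C_def R_def hull_inc)
  then have ZR: "Z \<subseteq> R" unfolding Z_def by (intro hull_minimal) (auto simp: R_def hull_inc)
  have "a \<notin> Z"
  proof
    assume "a \<in> Z"
    define N where "N = side_normal (A + \<epsilon> *\<^sub>R B) (A + \<epsilon> *\<^sub>R C) B"
    have "\<forall>v\<in>{a1, a2, b, c}. mink (lift v) N \<le> 0" and "mink (lift a) N > 0"
      using cut_separating_normal[where A = A and B = B and C = C and \<epsilon> = \<epsilon>] k1 k2 \<epsilon> d
      by (auto simp: N_def mult_le_0_iff simp flip: A_def B_def C_def)
    then show False
      using mink_lift_convex_hull_nonpos[of "{a1, a2, b, c}" N a] \<open>a \<in> Z\<close> a12 H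
      by (auto simp: Z_def)
  qed
  then show "Z \<subset> R" using ZR by (auto simp: R_def hull_inc)
  have "mdet (lift a1) (lift b) (lift c) = k1 * mdet A B C"
    by (simp add: k1 mdet_def algebra_simps flip: B_def C_def)
  then have "htriangle a1 b c"
    using mdet_lift_eq_0_iff[OF a12(1) H(2,3)] k1 d a12 H by (auto simp: htriangle_def)
  then have "interior (convex hull {a1, b, c}) \<noteq> {}"
    using convex_body_triangle by (simp add: convex_body_def)
  moreover have "convex hull {a1, b, c} \<subseteq> Z" unfolding Z_def by (rule hull_mono) auto
  ultimately have "interior Z \<noteq> {}" using interior_mono by blast
  then show "convex_body Z"
    using a12 H unfolding convex_body_def Z_def
    by (auto intro!: convex_hull_subset_H2 finite_imp_compact_convex_hull)
qed

lemma supporting_convex_hull_lift: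
  fixes u :: complex and c :: real
  defines "N \<equiv> line_normal u c"
  assumes S: "S \<subseteq> H2" and half: "\<forall>x\<in>convex hull S. inner u x \<le> c"
    and p: "p \<in> convex hull S" "inner u p = c"
  shows "\<forall>v\<in>S. mink (lift v) N \<le> 0" and "\<exists>v\<in>S. mink (lift v) N = 0"
proof -
  have sign: "mink (lift v) N \<le> 0 \<longleftrightarrow> inner u v \<le> c" "mink (lift v) N = 0 \<longleftrightarrow> inner u v = c"
    if "v \<in> H2" for v
    using that lift_den_pos[OF that] by (simp_all add: N_def mink_lift_line_normal divide_le_0_iff)
  show "\<forall>v\<in>S. mink (lift v) N \<le> 0" using half S sign(1) by (auto simp: hull_inc)
  have "p \<in> H2" using p(1) convex_hull_subset_H2[OF S] by auto
  then have "chord u c \<inter> convex hull S \<noteq> {}" using p by (auto simp: chord_def)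
  then show "\<exists>v\<in>S. mink (lift v) N = 0"
    using supporting_convex_hull_vertex[OF half] S sign(2) by auto
qed

lemma cut_triangle_thickness:
  fixes a b c :: complex and \<epsilon> \<sigma> :: real
  defines "A \<equiv> lift a" and "B \<equiv> lift b" and "C \<equiv> lift c"
  defines "a1 \<equiv> proj (A + \<epsilon> *\<^sub>R B)" and "a2 \<equiv> proj (A + \<epsilon> *\<^sub>R C)"
  assumes tri: "htriangle a b c" and \<epsilon>: "\<epsilon> > 0" and \<sigma>: "\<sigma> > 0"
    and cut: "cut_admissible \<sigma> A B C \<epsilon>" "cut_admissible \<sigma> A C B \<epsilon>"
  shows "arcosh (sqrt (1 + \<sigma>)) \<le> thickness (convex hull {a1, a2, b, c})"
proof -
  have H: "a \<in> H2" "b \<in> H2" "c \<in> H2" and "a \<noteq> b" "a \<noteq> c"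
    using tri htriangle_distinct by (auto simp: htriangle_def)
  have unit: "mink A A = -1" "mink B B = -1" "mink C C = -1"
    using H by (simp_all add: A_def B_def C_def mink_lift_self)
  have obtuse: "mink A B < 0" "mink A C < 0"
    using mink_lift_le(2) H \<open>a \<noteq> b\<close> \<open>a \<noteq> c\<close> by (fastforce simp: A_def B_def C_def)+
  have "mdet A B C \<noteq> 0"
    using tri mdet_lift_eq_0_iff[OF H] by (simp add: A_def B_def C_def htriangle_def)
  then have d: "mdet A B C \<noteq> 0" "mdet A C B \<noteq> 0" by (simp_all add: mdet_perm(2)[of A B C])
  obtain k1 where k1: "k1 > 0" "lift a1 = k1 *\<^sub>R (A + \<epsilon> *\<^sub>R B)"
    using proj_lift_comb(2)[OF H(1,2), of \<epsilon>] \<epsilon> by (auto simp: a1_def A_def B_def)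
  obtain k2 where k2: "k2 > 0" "lift a2 = k2 *\<^sub>R (A + \<epsilon> *\<^sub>R C)"
    using proj_lift_comb(2)[OF H(1,3), of \<epsilon>] \<epsilon> by (auto simp: a2_def A_def C_def)
  have S: "{a1, a2, b, c} \<subseteq> H2"
    using proj_lift_comb(1)[OF H(1,2), of \<epsilon>] proj_lift_comb(1)[OF H(1,3), of \<epsilon>] \<epsilon> H
    by (auto simp: a1_def a2_def A_def B_def C_def)
  have "convex_body (convex hull {a1, a2, b, c})"
    unfolding a1_def a2_def A_def B_def C_def by (rule cut_triangle(1)[OF tri \<epsilon>])
  then show ?thesis
  proof (rule thickness_ge_arcosh[OF _ \<sigma>])
    fix u c0 p
    assume "u \<noteq> 0" and half: "\<forall>x\<in>convex hull {a1, a2, b, c}. inner u x \<le> c0"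
      and p: "p \<in> convex hull {a1, a2, b, c}" "inner u p = c0"
    define N where "N = line_normal u c0"
    note vertices = supporting_convex_hull_lift[OF S half p, folded N_def]
    have N: "mink (A + \<epsilon> *\<^sub>R B) N \<le> 0" "mink B N \<le> 0" "mink C N \<le> 0" "mink (A + \<epsilon> *\<^sub>R C) N \<le> 0"
      using vertices(1) k1 k2 by (auto simp: mult_le_0_iff simp flip: B_def C_def)
    have "mink (A + \<epsilon> *\<^sub>R B) N = 0 \<or> mink B N = 0 \<or> mink (A + \<epsilon> *\<^sub>R C) N = 0 \<or> mink C N = 0"
      using vertices(2) k1 k2 by (auto simp flip: B_def C_def)
    then have "far_side \<sigma> N C \<or> far_side \<sigma> N (A + \<epsilon> *\<^sub>R C) \<or> far_side \<sigma> N B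
        \<or> far_side \<sigma> N (A + \<epsilon> *\<^sub>R B)"
      using cut_far_vertex[OF unit obtuse d(1) \<epsilon> _ cut(1) N]
        cut_far_vertex[OF unit(1,3,2) obtuse(2,1) d(2) \<epsilon> _ cut(2) N(4,3,2,1)] \<sigma>
      by auto
    then have "\<exists>z\<in>{a1, a2, b, c}. far_side \<sigma> N (lift z)"
      using k1 k2 by (auto simp: far_side_scaleR(2) simp flip: B_def C_def)
    then show "\<exists>z\<in>convex hull {a1, a2, b, c}. \<sigma> * mink (line_normal u c0) (line_normal u c0)
        \<le> (mink (lift z) (line_normal u c0))\<^sup>2"
      using far_side_lift_le S unfolding N_def by (meson hull_inc subsetD)
  qed
qed

lemma reduced_triangle_side_longest:
  assumes tri: "htriangle a b c" and red: "reduced (convex hull {a, b, c})"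
  shows "- mink (lift b) (lift c)
    = max (- mink (lift a) (lift b)) (max (- mink (lift b) (lift c)) (- mink (lift a) (lift c)))"
proof (rule ccontr)
  define A B C where "A = lift a" "B = lift b" "C = lift c"
  define M where "M = max (- mink A B) (max (- mink B C) (- mink A C))"
  define \<sigma> where "\<sigma> = (mdet A B C)\<^sup>2 / (M\<^sup>2 - 1)"
  assume "- mink (lift b) (lift c) \<noteq> max (- mink (lift a) (lift b)) (max (- mink (lift b) (lift c)) (- mink (lift a) (lift c)))"
  then have shorter: "- mink B C < M" by (auto simp: M_def A_B_C_def)
  have H: "a \<in> H2" "b \<in> H2" "c \<in> H2" and "a \<noteq> b" "b \<noteq> c" "a \<noteq> c"
    using tri htriangle_distinct by (auto simp: htriangle_def)
  have unit: "mink A A = -1" "mink B B = -1" "mink C C = -1"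
    using H by (simp_all add: A_B_C_def mink_lift_self)
  have sides: "mink A B < -1" "mink B C < -1" "mink A C < -1"
    using mink_lift_le(2) H \<open>a \<noteq> b\<close> \<open>b \<noteq> c\<close> \<open>a \<noteq> c\<close> by (fastforce simp: A_B_C_def)+
  have d: "mdet A B C \<noteq> 0"
    using tri mdet_lift_eq_0_iff[OF H] by (simp add: A_B_C_def htriangle_def)
  obtain \<epsilon> where \<epsilon>: "\<epsilon> > 0" "cut_admissible \<sigma> A B C \<epsilon>" "cut_admissible \<sigma> A C B \<epsilon>"
    using exists_cut[OF unit sides d] shorter unfolding M_def \<sigma>_def by blast
  have "M > 1" using sides by (auto simp: M_def)
  then have \<sigma>: "\<sigma> > 0" using d by (simp add: \<sigma>_def)
  define Z where "Z = convex hull {proj (A + \<epsilon> *\<^sub>R B), proj (A + \<epsilon> *\<^sub>R C), b, c}"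
  have "thickness (convex hull {a, b, c}) \<le> arcosh (sqrt (1 + \<sigma>))"
    using thickness_triangle_le_longest_side[OF tri] by (simp add: \<sigma>_def M_def A_B_C_def)
  also have "\<dots> \<le> thickness Z"
    unfolding Z_def A_B_C_def using cut_triangle_thickness[OF tri \<epsilon>(1) \<sigma>] \<epsilon>(2,3)
    by (simp add: A_B_C_def)
  finally have "thickness (convex hull {a, b, c}) \<le> thickness Z" .
  moreover have "convex_body Z" "Z \<subset> convex hull {a, b, c}"
    using cut_triangle[OF tri \<epsilon>(1)] by (simp_all add: Z_def A_B_C_def)
  ultimately show False using red by (auto simp: reduced_def)
qed

theorem corollary2:
  fixes a b c :: complex
  assumes "htriangle a b c"
    and "reduced (convex hull {a, b, c})"
  shows "regular_triangle a b c"
proof -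
  have "htriangle b c a" "htriangle c a b" using assms(1) by (auto simp: htriangle_def insert_commute)
  moreover have "reduced (convex hull {b, c, a})" "reduced (convex hull {c, a, b})"
    using assms(2) by (simp_all add: insert_commute)
  ultimately have "- mink (lift b) (lift c) = - mink (lift c) (lift a)"
    "- mink (lift c) (lift a) = - mink (lift a) (lift b)"
    using reduced_triangle_side_longest[OF assms] reduced_triangle_side_longest[of b c a]
      reduced_triangle_side_longest[of c a b]
    by (auto simp: mink_commute max_def split: if_splits)
  moreover have "a \<in> H2" "b \<in> H2" "c \<in> H2" using assms(1) by (auto simp: htriangle_def)
  ultimately show ?thesis by (simp add: regular_triangle_def hdist_lift mink_commute[of "lift a"])
qed

end
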